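(* If $n$ and $m$ are sufficiently large, the bounded-error randomized query complexity of $h_{1,n,m}$ satisfies $R(h_{1,n,m})=\Omega\!\left(\frac{nm}{\log m}\right)$.
   Context: Let $n,m$ be positive integers, $M=[n]\times[m]$ (a grid of cells with $n$ rows and $m$ columns), $\tilde M=M\cup\{\bot\}$ (pointers to cells, $\bot$ the null pointer). Let $T$ be the following fixed binary tree with $m$ leaves and $m-1$ internal nodes: if $m=2^r$, $T$ is the complete binary tree with $2^r$ leaves; if $2^r<m<2^{r+1}$, take the complete binary tree with $2^r$ leaves and add a pair of children to each of its $m-2^r$ leftmost leaves. Outgoing arcs are labeled 'left'/'right', leaves labeled $1,\dots,m$ from left to right, and $T(j)$ is the sequence of labels on the root-to-leaf-$j$ path. The alphabet is $\Sigma=\{0,1\}\times\tilde M\times\tilde M\times\tilde M$ with components $\mathrm{val},\mathrm{lpoint},\mathrm{rpoint},\mathrm{ipoint}$. The function $h_{1,n,m}\colon\Sigma^M\to\{0,1\}$ has $h_{1,n,m}(x)=1$ iff: (1) there is exactly one column $b$ with $\mathrm{val}(x_{i,b})=1$ for all $i\in[n]$ (marked column); (2) column $b$ contains a unique cell $a$ with $x_{a}\ne(1,\bot,\bot,\bot)$ (special element); (3) $\mathrm{ipoint}(x_{a})=a$; (4) for each column $j\ne b$, the path starting at $a$ and following $\mathrm{lpoint},\mathrm{rpoint}$ as specified by $T(j)$ exists (no $\bot$ on it) and ends at a cell $\ell_j$ in column $j$ with $\mathrm{val}(x_{\ell_j})=0$. A query returns the symbol $x_c\in\Sigma$ of one cell.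 $R(f)$ is the minimum worst-case expected number of queries of a randomized decision tree that outputs $f(x)$ with probability at least $9/10$ on every input $x$. *)

theory Defs
  imports "HOL-Probability.Probability"
begin

datatype ('c, 's) dtree = Out bool | Query 'c "'s \<Rightarrow> ('c, 's) dtree"

primrec dt_eval :: "('c, 's) dtree \<Rightarrow> ('c \<Rightarrow> 's) \<Rightarrow> bool" where
  "dt_eval (Out b) x = b"
| "dt_eval (Query c f) x = dt_eval (f (x c)) x"

primrec dt_cost :: "('c, 's) dtree \<Rightarrow> ('c \<Rightarrow> 's) \<Rightarrow> nat" where
  "dt_cost (Out b) x = 0"
| "dt_cost (Query c f) x = Suc (dt_cost (f (x c)) x)"

definition rdt_correct ::
  "('c \<Rightarrow> 's) set \<Rightarrow> (('c \<Rightarrow> 's) \<Rightarrow> bool) \<Rightarrow> ('c, 's) dtree pmf \<Rightarrow> bool" where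
  "rdt_correct X f D \<longleftrightarrow>
     (\<forall>x\<in>X. measure_pmf.prob D {t. dt_eval t x = f x} \<ge> 9/10)"

definition rdt_cost :: "('c \<Rightarrow> 's) set \<Rightarrow> ('c, 's) dtree pmf \<Rightarrow> ennreal" where
  "rdt_cost X D = (SUP x\<in>X. \<integral>\<^sup>+ t. ennreal (real (dt_cost t x)) \<partial>(measure_pmf D))"

definition R_query :: "('c \<Rightarrow> 's) set \<Rightarrow> (('c \<Rightarrow> 's) \<Rightarrow> bool) \<Rightarrow> ennreal" where
  "R_query X f = (INF D\<in>{D. rdt_correct X f D}. rdt_cost X D)"

datatype btree = Leaf | Node btree btree
datatype dir = Left | Right

primrec nleaves :: "btree \<Rightarrow> nat" where
  "nleaves Leaf = 1"
| "nleaves (Node l r) = nleaves l + nleaves r"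

primrec complete_tree :: "nat \<Rightarrow> btree" where
  "complete_tree 0 = Leaf"
| "complete_tree (Suc r) = Node (complete_tree r) (complete_tree r)"

primrec grow :: "nat \<Rightarrow> btree \<Rightarrow> btree" where
  "grow k Leaf = (if k > 0 then Node Leaf Leaf else Leaf)"
| "grow k (Node l r) = Node (grow k l) (grow (k - nleaves l) r)"

primrec leaf_paths :: "btree \<Rightarrow> dir list list" where
  "leaf_paths Leaf = [[]]"
| "leaf_paths (Node l r) = map (Cons Left) (leaf_paths l) @ map (Cons Right) (leaf_paths r)"

definition tree_T :: "nat \<Rightarrow> btree" where
  "tree_T m = (let r = (THE r. 2 ^ r \<le> m \<and> m < 2 ^ Suc r)
               in grow (m - 2 ^ r) (complete_tree r))"

text \<open>T(j), for leaves labelled 1..m from left to right.\<close>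
definition T_path :: "nat \<Rightarrow> nat \<Rightarrow> dir list" where
  "T_path m j = leaf_paths (tree_T m) ! (j - 1)"

type_synonym cell = "nat \<times> nat"   \<comment> \<open>(row, column)\<close>
type_synonym sym = "bool \<times> cell option \<times> cell option \<times> cell option"
  \<comment> \<open>(val, lpoint, rpoint, ipoint); None is the null pointer\<close>

definition val :: "sym \<Rightarrow> bool" where "val s = fst s"
definition lpoint :: "sym \<Rightarrow> cell option" where "lpoint s = fst (snd s)"
definition rpoint :: "sym \<Rightarrow> cell option" where "rpoint s = fst (snd (snd s))"
definition ipoint :: "sym \<Rightarrow> cell option" where "ipoint s = snd (snd (snd s))"

definition grid :: "nat \<Rightarrow> nat \<Rightarrow> cell set" where
  "grid n m = {1..n} \<times> {1..m}"

definition valid_sym :: "nat \<Rightarrow> nat \<Rightarrow> sym \<Rightarrow> bool" where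
  "valid_sym n m s \<longleftrightarrow>
     set_option (lpoint s) \<subseteq> grid n m \<and> set_option (rpoint s) \<subseteq> grid n m \<and>
     set_option (ipoint s) \<subseteq> grid n m"

text \<open>Inputs x in Sigma^M, represented as functions on cells that are valid on
the grid and a fixed dummy value outside it.\<close>
definition inputs :: "nat \<Rightarrow> nat \<Rightarrow> (cell \<Rightarrow> sym) set" where
  "inputs n m = {x. (\<forall>c\<in>grid n m. valid_sym n m (x c)) \<and>
                    (\<forall>c. c \<notin> grid n m \<longrightarrow> x c = (False, None, None, None))}"

primrec follow :: "(cell \<Rightarrow> sym) \<Rightarrow> cell \<Rightarrow> dir list \<Rightarrow> cell option" where
  "follow x c [] = Some c"
| "follow x c (d # ds) =
     (case (if d = Left then lpoint (x c) else rpoint (x c)) of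
        None \<Rightarrow> None
      | Some c' \<Rightarrow> follow x c' ds)"

definition marked_col :: "nat \<Rightarrow> (cell \<Rightarrow> sym) \<Rightarrow> nat \<Rightarrow> bool" where
  "marked_col n x b \<longleftrightarrow> (\<forall>i\<in>{1..n}. val (x (i, b)))"

definition h1 :: "nat \<Rightarrow> nat \<Rightarrow> (cell \<Rightarrow> sym) \<Rightarrow> bool" where
  "h1 n m x \<longleftrightarrow>
    (\<exists>b\<in>{1..m}. marked_col n x b \<and> (\<forall>b'\<in>{1..m}. marked_col n x b' \<longrightarrow> b' = b) \<and>
      (\<exists>a\<in>grid n m. snd a = b \<and> x a \<noteq> (True, None, None, None) \<and>
         (\<forall>a'\<in>grid n m. snd a' = b \<and> x a' \<noteq> (True, None, None, None) \<longrightarrow> a' = a) \<and>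
         ipoint (x a) = Some a \<and>
         (\<forall>j\<in>{1..m}. j \<noteq> b \<longrightarrow>
            (\<exists>l. follow x a (T_path m j) = Some l \<and> snd l = j \<and> \<not> val (x l)))))"

end

theory Submission
  imports Defs "HOL-Library.Sublist"
begin

text \<open>The hard inputs place the inner nodes of \<open>T\<close> injectively in rows \<open>2..n\<close> of the left
  half of the grid, each pointing to its children; leaf \<open>j\<close> is the zero cell of column \<open>j\<close>, in
  row 1 for the left half and in a row \<open>\<rho> j\<close> for the right half; all other cells are blank.
  Deleting the zero of a right column \<open>b\<close> gives an input \<open>W\<close> with \<open>h = 0\<close>, but a special
  element pointing to the children of the root in any cell of column \<open>b\<close> makes \<open>h = 1\<close>. So a
  correct algorithm queries each cell of column \<open>b\<close> on \<open>W\<close> with probability \<open>\<ge> 4/5\<close>.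

  \<open>W\<close> differs from the input \<open>U\<^sub>i\<close> whose zero in column \<open>b\<close> is in row \<open>i\<close> only at \<open>(i, b)\<close>
  and at the parent \<open>p\<close> of leaf \<open>b\<close>. Averaging over \<open>i\<close>, a rank argument bounds the queries to
  column \<open>b\<close> on \<open>W\<close> by four times those on \<open>U\<^sub>i\<close>, unless \<open>p\<close> is queried on \<open>U\<^sub>i\<close>. But then
  some ancestor of leaf \<open>b\<close> is queried before its own parent, and averaged over the position of
  that node among the \<open>\<approx> nm/2\<close> free cells this has probability at most \<open>K / (nm/2)\<close>, where
  \<open>K\<close> is the expected cost. Summing over the \<open>m/2\<close> right columns and the \<open>O(log m)\<close>
  ancestors of their leaves gives \<open>(m/2) \<cdot> (4n/5) \<le> (4 + O(log m)) \<cdot> K\<close>.\<close>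

section \<open>The tree \<open>T\<close>\<close>

lemma length_leaf_paths [simp]: "length (leaf_paths t) = nleaves t"
  by (induction t) auto

lemma leaf_paths_ne_Nil [simp]: "leaf_paths t \<noteq> []"
  by (induction t) auto

lemma distinct_leaf_paths: "distinct (leaf_paths t)"
  by (induction t) (auto simp: distinct_map inj_on_def)

lemma leaf_paths_prefix_free:
  "p \<in> set (leaf_paths t) \<Longrightarrow> q \<in> set (leaf_paths t) \<Longrightarrow> prefix p q \<Longrightarrow> p = q"
  by (induction t arbitrary: p q) auto

lemma nleaves_pos: "nleaves t \<ge> 1"
  by (induction t) auto

primrec inner_nodes :: "btree \<Rightarrow> dir list set" where
  "inner_nodes Leaf = {}"
| "inner_nodes (Node l r) = insert [] (Cons Left ` inner_nodes l \<union> Cons Right ` inner_nodes r)"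

lemma inner_nodes_iff: "u \<in> inner_nodes t \<longleftrightarrow> (\<exists>p\<in>set (leaf_paths t). strict_prefix u p)"
proof (induction t arbitrary: u)
  case (Node l r)
  show ?case
  proof (cases u)
    case Nil
    obtain p where "p \<in> set (leaf_paths l)" using leaf_paths_ne_Nil by (meson list.set_sel(1))
    then show ?thesis using Nil by force
  next
    case (Cons d u')
    then show ?thesis using Node.IH by (cases d) (fastforce simp: bex_Un)+
  qed
qed simp

lemma finite_inner_nodes [simp]: "finite (inner_nodes t)"
  by (induction t) auto

lemma card_inner_nodes: "card (inner_nodes t) = nleaves t - 1"
proof (induction t)
  case (Node l r)
  have "nleaves l \<ge> 1" "nleaves r \<ge> 1" by (rule nleaves_pos)+
  moreover have "card (Cons Left ` inner_nodes l \<union> Cons Right ` inner_nodes r)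
      = card (inner_nodes l) + card (inner_nodes r)"
    by (subst card_Un_disjoint) (auto simp: card_image)
  moreover have "[] \<notin> Cons Left ` inner_nodes l \<union> Cons Right ` inner_nodes r" by blast
  ultimately show ?case using Node.IH by simp
qed simp

lemma leaf_path_notin_inner_nodes: "p \<in> set (leaf_paths t) \<Longrightarrow> p \<notin> inner_nodes t"
  using leaf_paths_prefix_free by (auto simp: inner_nodes_iff strict_prefix_def)

lemma Nil_in_nodes: "[] \<in> inner_nodes t \<union> set (leaf_paths t)"
  by (cases t) auto

lemma inner_node_snoc: "u \<in> inner_nodes t \<Longrightarrow> u @ [d] \<in> inner_nodes t \<union> set (leaf_paths t)"
proof (induction t arbitrary: u)
  case (Node l r)
  then show ?case using Nil_in_nodes[of l] Nil_in_nodes[of r] by (cases u; cases d) (auto simp: image_iff)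
qed simp

lemma butlast_in_inner_nodes:
  assumes "q \<in> inner_nodes t \<union> set (leaf_paths t)" "q \<noteq> []"
  shows "butlast q \<in> inner_nodes t"
proof -
  obtain p where "p \<in> set (leaf_paths t)" "prefix q p"
    using assms(1) by (auto simp: inner_nodes_iff strict_prefix_def)
  moreover have "strict_prefix (butlast q) q"
    using assms(2) by (metis append_butlast_last_id strict_prefixI')
  ultimately show ?thesis
    unfolding inner_nodes_iff by (blast intro: prefix_order.less_le_trans)
qed

primrec height :: "btree \<Rightarrow> nat" where
  "height Leaf = 0"
| "height (Node l r) = Suc (max (height l) (height r))"

lemma length_leaf_path_le_height: "p \<in> set (leaf_paths t) \<Longrightarrow> length p \<le> height t"
  by (induction t arbitrary: p) (auto, fastforce+)

lemma nleaves_grow: "nleaves (grow k t) = nleaves t + min k (nleaves t)"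
  by (induction t arbitrary: k) auto

lemma height_grow: "height (grow k t) \<le> Suc (height t)"
proof (induction t arbitrary: k)
  case (Node l r)
  show ?case using Node.IH[of k] Node.IH(2)[of "k - nleaves l"] by (simp add: max_def)
qed simp

lemma nleaves_complete_tree [simp]: "nleaves (complete_tree r) = 2 ^ r"
  by (induction r) auto

lemma height_complete_tree [simp]: "height (complete_tree r) = r"
  by (induction r) auto

lemma tree_T_eq:
  assumes "2 ^ r \<le> m" "m < 2 ^ Suc r"
  shows "tree_T m = grow (m - 2 ^ r) (complete_tree r)"
proof -
  have "(THE r. 2 ^ r \<le> m \<and> m < 2 ^ Suc r) = r"
  proof (rule the_equality)
    fix r' assume "2 ^ r' \<le> m \<and> m < 2 ^ Suc r'"
    then have "(2::nat) ^ r' < 2 ^ Suc r" "(2::nat) ^ r < 2 ^ Suc r'"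
      using assms by linarith+
    then have "r' < Suc r" "r < Suc r'"
      by (metis power_less_imp_less_exp one_less_numeral_iff semiring_norm(76))+
    then show "r' = r" by linarith
  qed (use assms in simp)
  then show ?thesis unfolding tree_T_def Let_def by simp
qed

lemma nleaves_tree_T: "m \<ge> 1 \<Longrightarrow> nleaves (tree_T m) = m"
  using ex_power_ivl1[of 2 m] by (auto simp: tree_T_eq nleaves_grow)

lemma height_tree_T: "2 ^ r \<le> m \<Longrightarrow> m < 2 ^ Suc r \<Longrightarrow> height (tree_T m) \<le> Suc r"
  using height_grow[of _ "complete_tree r"] by (simp add: tree_T_eq)

lemma tree_T_ne_Leaf: "m \<ge> 2 \<Longrightarrow> tree_T m \<noteq> Leaf"
proof -
  assume "m \<ge> 2"
  then obtain r where r: "2 ^ r \<le> m" "m < 2 ^ Suc r" using ex_power_ivl1[of 2 m] by auto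
  with \<open>m \<ge> 2\<close> obtain r' where "r = Suc r'" by (cases r) auto
  then show ?thesis using tree_T_eq[OF r] by simp
qed

abbreviation T_leaves :: "nat \<Rightarrow> dir list set" where
  "T_leaves m \<equiv> set (leaf_paths (tree_T m))"

abbreviation T_inner :: "nat \<Rightarrow> dir list set" where
  "T_inner m \<equiv> inner_nodes (tree_T m)"

definition leaf_col :: "nat \<Rightarrow> dir list \<Rightarrow> nat" where
  "leaf_col m q = (THE j. j \<in> {1..m} \<and> T_path m j = q)"

context
  fixes m :: nat
  assumes m2: "m \<ge> 2"
begin

lemma length_leaf_paths_T: "length (leaf_paths (tree_T m)) = m"
  using nleaves_tree_T m2 by simp

lemma T_path_in_leaves: "j \<in> {1..m} \<Longrightarrow> T_path m j \<in> T_leaves m"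
  unfolding T_path_def using length_leaf_paths_T by auto

lemma T_path_inj: "i \<in> {1..m} \<Longrightarrow> j \<in> {1..m} \<Longrightarrow> T_path m i = T_path m j \<Longrightarrow> i = j"
  unfolding T_path_def using length_leaf_paths_T distinct_leaf_paths
  by (auto simp: nth_eq_iff_index_eq)

lemma leaf_col_spec:
  assumes "q \<in> T_leaves m"
  shows "leaf_col m q \<in> {1..m} \<and> T_path m (leaf_col m q) = q"
proof -
  obtain i where "i < m" "leaf_paths (tree_T m) ! i = q"
    using assms length_leaf_paths_T by (auto simp: in_set_conv_nth)
  then have i: "Suc i \<in> {1..m} \<and> T_path m (Suc i) = q"
    unfolding T_path_def by auto
  show ?thesis unfolding leaf_col_def
    by (rule theI[of _ "Suc i"]) (use i T_path_inj in blast)+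
qed

lemma leaf_col_T_path: "j \<in> {1..m} \<Longrightarrow> leaf_col m (T_path m j) = j"
  using leaf_col_spec[OF T_path_in_leaves] T_path_inj by blast

lemma Nil_in_T_inner: "[] \<in> T_inner m"
  using tree_T_ne_Leaf[OF m2] by (cases "tree_T m") auto

lemma T_path_ne_Nil: "j \<in> {1..m} \<Longrightarrow> T_path m j \<noteq> []"
  using T_path_in_leaves Nil_in_T_inner leaf_path_notin_inner_nodes by fastforce

lemma card_T_inner: "card (T_inner m) = m - 1"
  using card_inner_nodes nleaves_tree_T m2 by simp

lemma length_T_path_le_log: "\<exists>r. 2 ^ r \<le> m \<and> (\<forall>j\<in>{1..m}. length (T_path m j) \<le> Suc r)"
proof -
  obtain r where r: "2 ^ r \<le> m" "m < 2 ^ Suc r" using ex_power_ivl1[of 2 m] m2 by auto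
  then have "length (T_path m j) \<le> Suc r" if "j \<in> {1..m}" for j
    using length_leaf_path_le_height[OF T_path_in_leaves[OF that]] height_tree_T by fastforce
  with r show ?thesis by blast
qed

end

section \<open>Query sequences\<close>

primrec queries :: "('c, 's) dtree \<Rightarrow> ('c \<Rightarrow> 's) \<Rightarrow> 'c list" where
  "queries (Out b) x = []"
| "queries (Query c f) x = c # queries (f (x c)) x"

lemma length_queries: "length (queries t x) = dt_cost t x"
  by (induction t) auto

fun upto_first :: "'c set \<Rightarrow> 'c list \<Rightarrow> 'c list" where
  "upto_first D [] = []"
| "upto_first D (c # l) = (if c \<in> D then [c] else c # upto_first D l)"

lemma set_upto_first: "set (upto_first D l) \<subseteq> set l"
  by (induction l) auto

lemma upto_first_queries_agree:
  assumes "\<And>z. z \<notin> D \<Longrightarrow> x z = y z"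
  shows "upto_first D (queries t x) = upto_first D (queries t y)"
  using assms by (induction t) auto

lemma dt_eval_agree:
  assumes "\<And>z. z \<notin> D \<Longrightarrow> x z = y z" "set (queries t x) \<inter> D = {}"
  shows "dt_eval t x = dt_eval t y"
  using assms by (induction t) auto

abbreviation before :: "'a \<Rightarrow> 'a list \<Rightarrow> 'a list" where
  "before p xs \<equiv> takeWhile (\<lambda>z. z \<noteq> p) xs"

lemma mem_of_not_mem_before: "x \<in> set l \<Longrightarrow> x \<notin> set (before p l) \<Longrightarrow> p \<in> set l"
  by (induction l) (auto split: if_splits)

lemma mem_upto_first_singleton: "c \<in> set l \<Longrightarrow> c \<in> set (upto_first {c} l)"
  by (induction l) auto

lemma mem_upto_first_if_before: "c \<in> set (before p l) \<Longrightarrow> c \<in> set (upto_first {c, p} l)"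
  by (induction l) auto

lemma mem_upto_first_if_not_before:
  "p \<in> set l \<Longrightarrow> c \<notin> set (before p l) \<Longrightarrow> p \<in> set (upto_first {c, p} l)"
  by (induction l) auto

lemma before_subset_upto_first_if_not_before:
  "c \<notin> set (before p l) \<Longrightarrow> set (before p l) \<subseteq> set (upto_first {c, p} l)"
  by (induction l) auto

lemma before_before_subset_upto_first:
  "c \<in> set (before p l) \<Longrightarrow> set (before c (before p l)) \<union> {c} \<subseteq> set (upto_first {c, p} l)"
  by (induction l) auto

text \<open>The summand is the rank of \<open>c\<close> among the elements of \<open>X\<close> in order of first occurrence
  in \<open>xs\<close>, so the sum is \<open>1 + \<dots> + card (set xs \<inter> X)\<close>.\<close>

lemma sum_card_before_rank:
  "2 * (\<Sum>c\<in>set xs \<inter> X. card ((set (before c xs) \<union> {c}) \<inter> X))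
     = card (set xs \<inter> X) * (card (set xs \<inter> X) + 1)"
proof (induction xs rule: rev_induct)
  case (snoc y xs)
  have before_snoc: "before c (xs @ [y]) = before c xs" if "c \<in> set xs" for c
    using that by (intro takeWhile_append1) auto
  let ?rank = "\<lambda>c. card ((set (before c xs) \<union> {c}) \<inter> X)"
  show ?case
  proof (cases "y \<in> X \<and> y \<notin> set xs")
    case False
    then have "set (xs @ [y]) \<inter> X = set xs \<inter> X" by auto
    moreover have "(\<Sum>c\<in>set xs \<inter> X. card ((set (before c (xs @ [y])) \<union> {c}) \<inter> X))
        = (\<Sum>c\<in>set xs \<inter> X. ?rank c)"
      by (rule sum.cong) (auto simp: before_snoc)
    ultimately show ?thesis using snoc by simp
  next
    case True
    then have S: "set (xs @ [y]) \<inter> X = insert y (set xs \<inter> X)" by auto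
    have "before y (xs @ [y]) = xs"
      using True by (subst takeWhile_append2) auto
    then have "(\<Sum>c\<in>set (xs @ [y]) \<inter> X. card ((set (before c (xs @ [y])) \<union> {c}) \<inter> X))
        = card (insert y (set xs \<inter> X)) + (\<Sum>c\<in>set xs \<inter> X. ?rank c)"
      unfolding S using True by (auto simp: before_snoc Int_insert_left intro!: sum.cong)
    moreover have "card (insert y (set xs \<inter> X)) = card (set xs \<inter> X) + 1" using True by simp
    ultimately show ?thesis using snoc unfolding S by (simp add: algebra_simps)
  qed
qed simp

lemma card_mult_le_sum_rank:
  fixes g :: "'c \<Rightarrow> nat"
  assumes "finite X"
    and rank: "\<And>c. c \<in> set xs \<inter> X \<Longrightarrow> card ((set (before c xs) \<union> {c}) \<inter> X) \<le> g c"
    and all: "\<And>c. c \<in> X - set xs \<Longrightarrow> card (set xs \<inter> X) \<le> g c"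
  shows "card X * card (set xs \<inter> X) \<le> 2 * (\<Sum>c\<in>X. g c)"
proof -
  define A where "A = set xs \<inter> X"
  define k where "k = card A"
  have "A \<subseteq> X" unfolding A_def by auto
  then have "k \<le> card X" and card_diff: "card (X - A) = card X - k"
    and split: "(\<Sum>c\<in>X. g c) = (\<Sum>c\<in>A. g c) + (\<Sum>c\<in>X - A. g c)"
    using \<open>finite X\<close> by (auto simp: k_def card_mono card_Diff_subset finite_subset sum.subset_diff)
  have "k * (k + 1) = 2 * (\<Sum>c\<in>A. card ((set (before c xs) \<union> {c}) \<inter> X))"
    unfolding k_def A_def by (rule sum_card_before_rank[symmetric])
  also have "\<dots> \<le> 2 * (\<Sum>c\<in>A. g c)"
    using rank unfolding A_def by (intro mult_le_mono2 sum_mono) auto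
  finally have s1: "k * (k + 1) \<le> 2 * (\<Sum>c\<in>A. g c)" .
  have "(card X - k) * k = (\<Sum>c\<in>X - A. k)" using card_diff by simp
  also have "\<dots> \<le> (\<Sum>c\<in>X - A. g c)"
    using all unfolding A_def k_def by (intro sum_mono) auto
  finally have s2: "(card X - k) * k \<le> (\<Sum>c\<in>X - A. g c)" .
  obtain d where d: "card X = k + d" using \<open>k \<le> card X\<close> le_Suc_ex by blast
  have "card X * k \<le> k * (k + 1) + 2 * ((card X - k) * k)"
    unfolding d by (simp add: algebra_simps)
  also have "\<dots> \<le> 2 * (\<Sum>c\<in>X. g c)" using s1 s2 split by linarith
  finally show ?thesis unfolding k_def A_def .
qed

lemma card_inter_le_card_before:
  assumes "finite X"
  shows "card (set l \<inter> X) \<le> card (set (before p l) \<inter> X) + card X * of_bool (p \<in> set l)"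
proof (cases "p \<in> set l")
  case True
  then show ?thesis using card_mono[OF assms, of "set l \<inter> X"] by auto
next
  case False
  then have "before p l = l" by (auto simp: takeWhile_eq_all_conv)
  then show ?thesis by (simp del: takeWhile_eq_all_conv)
qed

text \<open>In the next two lemmas \<open>l\<close> and \<open>ls c\<close> are the queries on inputs \<open>x\<close> and \<open>x\<^sub>c\<close> that differ
  only at \<open>c\<close> and \<open>p\<close>. Either \<open>p\<close> is found on \<open>x\<^sub>c\<close>, or \<open>x\<^sub>c\<close> sees all queries of \<open>x\<close>
  before \<open>p\<close> up to \<open>c\<close>, which the rank identity turns into an average.\<close>

lemma card_mult_before_le_sum:
  assumes "finite X"
    and agree: "\<And>c. c \<in> X \<Longrightarrow> upto_first {c, p} (ls c) = upto_first {c, p} l"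
  shows "card X * card (set (before p l) \<inter> X) \<le> 2 * (\<Sum>c\<in>X. card (set (ls c) \<inter> X))"
proof (rule card_mult_le_sum_rank[OF \<open>finite X\<close>])
  fix c assume c: "c \<in> set (before p l) \<inter> X"
  then have "set (before c (before p l)) \<union> {c} \<subseteq> set (ls c)"
    using before_before_subset_upto_first[of c p l] agree[of c] set_upto_first[of "{c, p}" "ls c"]
    by auto
  then show "card ((set (before c (before p l)) \<union> {c}) \<inter> X) \<le> card (set (ls c) \<inter> X)"
    using \<open>finite X\<close> by (intro card_mono) auto
next
  fix c assume c: "c \<in> X - set (before p l)"
  then have "set (before p l) \<subseteq> set (ls c)"
    using before_subset_upto_first_if_not_before[of c p l] agree[of c] set_upto_first[of "{c, p}" "ls c"]
    by auto
  then show "card (set (before p l) \<inter> X) \<le> card (set (ls c) \<inter> X)"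
    using \<open>finite X\<close> by (intro card_mono) auto
qed

lemma card_mult_le_sum_agreeing:
  assumes "finite X"
    and agree: "\<And>c. c \<in> X \<Longrightarrow> upto_first {c, p} (ls c) = upto_first {c, p} l"
  shows "card X * card (set l \<inter> X)
    \<le> 4 * (\<Sum>c\<in>X. card (set (ls c) \<inter> X)) + card X * (\<Sum>c\<in>X. of_bool (p \<in> set (ls c)))"
proof -
  define A where "A = set (before p l) \<inter> X"
  have "A \<subseteq> X" unfolding A_def by auto
  have found: "of_bool (p \<in> set l) \<le> of_bool (p \<in> set (ls c)) + (of_bool (c \<in> A) :: nat)"
    if "c \<in> X" for c
  proof (cases "p \<in> set l \<and> c \<notin> A")
    case True
    with that have "p \<in> set (upto_first {c, p} l)"
      by (intro mem_upto_first_if_not_before) (auto simp: A_def)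
    then have "p \<in> set (ls c)" using agree[OF that] set_upto_first[of "{c, p}" "ls c"] by auto
    then show ?thesis by simp
  next
    case False
    then show ?thesis by auto
  qed
  from card_inter_le_card_before[OF \<open>finite X\<close>, of l p]
  have "card X * card (set l \<inter> X) \<le> (\<Sum>c\<in>X. card A + card X * of_bool (p \<in> set l))"
    unfolding A_def by simp
  also have "\<dots> \<le> (\<Sum>c\<in>X. card A + card X * of_bool (p \<in> set (ls c)) + card X * of_bool (c \<in> A))"
  proof (rule sum_mono)
    fix c assume "c \<in> X"
    from mult_le_mono2[OF found[OF this], of "card X"]
    show "card A + card X * of_bool (p \<in> set l)
      \<le> card A + card X * of_bool (p \<in> set (ls c)) + card X * of_bool (c \<in> A)"
      by (simp add: algebra_simps)
  qed
  also have "\<dots> = card X * card A + card X * (\<Sum>c\<in>X. of_bool (p \<in> set (ls c)))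
      + card X * (\<Sum>c\<in>X. of_bool (c \<in> A))"
    by (simp add: sum.distrib sum_distrib_left del: sum_of_bool_eq)
  also have "(\<Sum>c\<in>X. of_bool (c \<in> A) :: nat) = card A"
    using \<open>A \<subseteq> X\<close> \<open>finite X\<close> by (simp add: Int_absorb1)
  also have "card X * card A \<le> 2 * (\<Sum>c\<in>X. card (set (ls c) \<inter> X))"
    unfolding A_def by (rule card_mult_before_le_sum[OF assms])
  finally show ?thesis by linarith
qed

section \<open>Hard inputs\<close>

definition blank_sym :: sym where "blank_sym = (True, None, None, None)"
definition zero_sym :: sym where "zero_sym = (False, None, None, None)"

definition ptr_to :: "dir \<Rightarrow> sym \<Rightarrow> cell option" where
  "ptr_to d s = (if d = Left then lpoint s else rpoint s)"

lemma follow_Cons: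
  "follow x c (d # ds) = (case ptr_to d (x c) of None \<Rightarrow> None | Some c' \<Rightarrow> follow x c' ds)"
  by (simp add: ptr_to_def)

text \<open>In a pointer input, \<open>lr j\<close> is the row of the zero cell of column \<open>j\<close>, which is the cell
  of leaf \<open>j\<close>; the inner nodes in \<open>J\<close> sit in the cells given by \<open>\<phi>\<close> and point to the cells of
  their children; all other cells of the grid are blank.\<close>

definition child_ptr ::
  "nat \<Rightarrow> (nat \<Rightarrow> nat option) \<Rightarrow> dir list set \<Rightarrow> (dir list \<Rightarrow> cell) \<Rightarrow> dir list \<Rightarrow> cell option" where
  "child_ptr m lr J \<phi> q =
     (if q \<in> T_leaves m then map_option (\<lambda>i. (i, leaf_col m q)) (lr (leaf_col m q))
      else if q \<in> J then Some (\<phi> q) else None)"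

definition node_at :: "dir list set \<Rightarrow> (dir list \<Rightarrow> cell) \<Rightarrow> cell \<Rightarrow> dir list" where
  "node_at J \<phi> c = (SOME u. u \<in> J \<and> \<phi> u = c)"

definition pointer_input ::
  "nat \<Rightarrow> nat \<Rightarrow> (nat \<Rightarrow> nat option) \<Rightarrow> dir list set \<Rightarrow> (dir list \<Rightarrow> cell) \<Rightarrow> cell \<Rightarrow> sym" where
  "pointer_input n m lr J \<phi> c =
     (if c \<in> grid n m then
        (if lr (snd c) = Some (fst c) then zero_sym
         else if c \<in> \<phi> ` J then
           (True, child_ptr m lr J \<phi> (node_at J \<phi> c @ [Left]),
            child_ptr m lr J \<phi> (node_at J \<phi> c @ [Right]), None)
         else blank_sym)
      else zero_sym)"

lemma node_at_eq: "inj_on \<phi> J \<Longrightarrow> u \<in> J \<Longrightarrow> node_at J \<phi> (\<phi> u) = u"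
  unfolding node_at_def by (rule some_equality) (auto simp: inj_on_def)

lemma node_at_in: "c \<in> \<phi> ` J \<Longrightarrow> node_at J \<phi> c \<in> J \<and> \<phi> (node_at J \<phi> c) = c"
  unfolding node_at_def by (rule someI_ex) blast

lemma pointer_input_cong:
  assumes "\<And>q. q \<in> J \<Longrightarrow> \<phi> q = \<psi> q"
  shows "pointer_input n m lr J \<phi> = pointer_input n m lr J \<psi>"
proof -
  have im: "\<phi> ` J = \<psi> ` J" using assms by (auto simp: image_def)
  have node: "node_at J \<phi> = node_at J \<psi>"
  proof
    fix c
    have "(\<lambda>u. u \<in> J \<and> \<phi> u = c) = (\<lambda>u. u \<in> J \<and> \<psi> u = c)" using assms by auto
    then show "node_at J \<phi> c = node_at J \<psi> c" unfolding node_at_def by simp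
  qed
  have ptr: "child_ptr m lr J \<phi> = child_ptr m lr J \<psi>"
    using assms by (auto simp: child_ptr_def fun_eq_iff)
  show ?thesis unfolding pointer_input_def[abs_def] im node ptr ..
qed

lemma child_ptr_in_grid:
  assumes "m \<ge> 2" "\<And>j i. lr j = Some i \<Longrightarrow> i \<in> {1..n}" "\<phi> ` J \<subseteq> grid n m"
  shows "set_option (child_ptr m lr J \<phi> q) \<subseteq> grid n m"
proof (cases "q \<in> T_leaves m")
  case True
  then show ?thesis
    using leaf_col_spec[OF assms(1) True] assms(2) unfolding child_ptr_def grid_def by auto
next
  case False
  then show ?thesis using assms(3) unfolding child_ptr_def by (auto simp: image_subset_iff)
qed

lemma pointer_input_in_inputs:
  assumes "m \<ge> 2" "\<And>j i. lr j = Some i \<Longrightarrow> i \<in> {1..n}" "\<phi> ` J \<subseteq> grid n m"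
  shows "pointer_input n m lr J \<phi> \<in> inputs n m"
  using child_ptr_in_grid[OF assms] unfolding inputs_def
  by (auto simp: pointer_input_def valid_sym_def lpoint_def rpoint_def ipoint_def
      zero_sym_def blank_sym_def)

lemma follow_child_ptr:
  assumes m2: "m \<ge> 2" and j: "j \<in> {1..m}" and leaf: "lr j = Some i"
    and nodes: "\<And>u d. u \<in> T_inner m \<Longrightarrow> ptr_to d (x (\<phi> u)) = child_ptr m lr (T_inner m) \<phi> (u @ [d])"
  shows "q \<in> T_inner m \<Longrightarrow> (\<And>d. ptr_to d (x a) = child_ptr m lr (T_inner m) \<phi> (q @ [d])) \<Longrightarrow>
    q @ s = T_path m j \<Longrightarrow> follow x a s = Some (i, j)"
proof (induction s arbitrary: q a)
  case Nil
  then show ?case using leaf_path_notin_inner_nodes[OF T_path_in_leaves[OF m2 j]] by simp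
next
  case (Cons d s)
  consider "q @ [d] \<in> T_inner m" | "q @ [d] \<in> T_leaves m"
    using inner_node_snoc[OF Cons.prems(1)] by blast
  then show ?case
  proof cases
    case 1
    then have "ptr_to d (x a) = Some (\<phi> (q @ [d]))"
      using Cons.prems(2) leaf_path_notin_inner_nodes unfolding child_ptr_def by auto
    then show ?thesis
      using Cons.IH[OF 1 nodes[OF 1]] Cons.prems(3) by (simp add: follow_Cons del: follow.simps)
  next
    case 2
    have "prefix (q @ [d]) (T_path m j)"
      using Cons.prems(3) by (metis append.assoc append_Cons append_Nil prefixI)
    then have "q @ [d] = T_path m j"
      using leaf_paths_prefix_free 2 T_path_in_leaves[OF m2 j] by blast
    then have "q @ d # s = q @ [d]" "leaf_col m (q @ [d]) = j"
      using Cons.prems(3) leaf_col_T_path[OF m2 j] by simp_all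
    then have "s = []" "leaf_col m (q @ [d]) = j" by simp_all
    then show ?thesis
      using Cons.prems(2)[of d] 2 leaf unfolding child_ptr_def by (simp add: follow_Cons del: follow.simps(2))
  qed
qed

definition leaf_row :: "nat \<Rightarrow> (nat \<Rightarrow> nat) \<Rightarrow> nat \<Rightarrow> nat option" where
  "leaf_row m \<rho> j =
     (if 1 \<le> j \<and> j \<le> m div 2 then Some 1 else if m div 2 < j \<and> j \<le> m then Some (\<rho> j) else None)"

definition node_cells :: "nat \<Rightarrow> nat \<Rightarrow> cell set" where
  "node_cells n m = {2..n} \<times> {1..m div 2}"

definition Leaf_rows :: "nat \<Rightarrow> nat \<Rightarrow> (nat \<Rightarrow> nat) set" where
  "Leaf_rows n m = PiE {m div 2 + 1..m} (\<lambda>_. {1..n})"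

definition Embeddings :: "nat \<Rightarrow> nat \<Rightarrow> (dir list \<Rightarrow> cell) set" where
  "Embeddings n m =
     {\<phi> \<in> extensional (T_inner m). inj_on \<phi> (T_inner m) \<and> \<phi> ` T_inner m \<subseteq> node_cells n m}"

definition tree_input :: "nat \<Rightarrow> nat \<Rightarrow> (nat \<Rightarrow> nat) \<Rightarrow> (dir list \<Rightarrow> cell) \<Rightarrow> cell \<Rightarrow> sym" where
  "tree_input n m \<rho> \<phi> = pointer_input n m (leaf_row m \<rho>) (T_inner m) \<phi>"

definition marked_input ::
  "nat \<Rightarrow> nat \<Rightarrow> (nat \<Rightarrow> nat) \<Rightarrow> (dir list \<Rightarrow> cell) \<Rightarrow> nat \<Rightarrow> cell \<Rightarrow> sym" where
  "marked_input n m \<rho> \<phi> b = pointer_input n m ((leaf_row m \<rho>)(b := None)) (T_inner m) \<phi>"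

definition pruned_input ::
  "nat \<Rightarrow> nat \<Rightarrow> (nat \<Rightarrow> nat) \<Rightarrow> (dir list \<Rightarrow> cell) \<Rightarrow> dir list \<Rightarrow> cell \<Rightarrow> sym" where
  "pruned_input n m \<rho> \<phi> u = pointer_input n m (leaf_row m \<rho>) (T_inner m - {u}) \<phi>"

definition special_input ::
  "nat \<Rightarrow> nat \<Rightarrow> (nat \<Rightarrow> nat) \<Rightarrow> (dir list \<Rightarrow> cell) \<Rightarrow> nat \<Rightarrow> nat \<Rightarrow> cell \<Rightarrow> sym" where
  "special_input n m \<rho> \<phi> b r =
     (let lr = (leaf_row m \<rho>)(b := None)
      in (marked_input n m \<rho> \<phi> b)((r, b) :=
           (True, child_ptr m lr (T_inner m) \<phi> [Left], child_ptr m lr (T_inner m) \<phi> [Right], Some (r, b))))"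

lemma leaf_row_Some: "j \<in> {1..m} \<Longrightarrow> \<exists>i. leaf_row m \<rho> j = Some i"
  unfolding leaf_row_def by auto

lemma marked_input_upd: "marked_input n m (\<rho>(b := i)) \<phi> b = marked_input n m \<rho> \<phi> b"
proof -
  have "(leaf_row m (\<rho>(b := i)))(b := None) = (leaf_row m \<rho>)(b := None)"
    by (auto simp: leaf_row_def fun_eq_iff)
  then show ?thesis unfolding marked_input_def by simp
qed

lemma pruned_input_upd: "pruned_input n m \<rho> (\<phi>(u := c)) u = pruned_input n m \<rho> \<phi> u"
  unfolding pruned_input_def by (rule pointer_input_cong) auto

context
  fixes n m :: nat and \<rho> :: "nat \<Rightarrow> nat" and \<phi> :: "dir list \<Rightarrow> cell"
  assumes m2: "m \<ge> 2" and n2: "n \<ge> 2"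
    and \<rho>: "\<rho> \<in> Leaf_rows n m" and \<phi>: "\<phi> \<in> Embeddings n m"
begin

lemma leaf_row_range: "leaf_row m \<rho> j = Some i \<Longrightarrow> i \<in> {1..n}"
  using \<rho> n2 unfolding leaf_row_def Leaf_rows_def by (auto simp: PiE_iff split: if_splits)

lemma phi_inj: "inj_on \<phi> (T_inner m)"
  using \<phi> unfolding Embeddings_def by blast

lemma leaf_row_upd_range: "((leaf_row m \<rho>)(b := None)) j = Some i \<Longrightarrow> i \<in> {1..n}"
  using leaf_row_range by (auto split: if_splits)

lemma phi_bounds:
  "u \<in> T_inner m \<Longrightarrow> 2 \<le> fst (\<phi> u) \<and> fst (\<phi> u) \<le> n \<and> 1 \<le> snd (\<phi> u) \<and> snd (\<phi> u) \<le> m div 2"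
  using \<phi> unfolding Embeddings_def node_cells_def by auto

lemma phi_grid: "J \<subseteq> T_inner m \<Longrightarrow> \<phi> ` J \<subseteq> grid n m"
proof (rule image_subsetI)
  fix u assume "J \<subseteq> T_inner m" "u \<in> J"
  then have "fst (\<phi> u) \<in> {1..n}" "snd (\<phi> u) \<in> {1..m div 2}" using phi_bounds[of u] by auto
  moreover have "m div 2 \<le> m" by simp
  ultimately have "fst (\<phi> u) \<in> {1..n}" "snd (\<phi> u) \<in> {1..m}" by auto
  then show "\<phi> u \<in> grid n m" unfolding grid_def by (simp add: mem_Times_iff)
qed

lemma tree_input_in_inputs: "tree_input n m \<rho> \<phi> \<in> inputs n m"
  unfolding tree_input_def by (rule pointer_input_in_inputs[OF m2 leaf_row_range phi_grid]) auto

lemma marked_input_in_inputs: "marked_input n m \<rho> \<phi> b \<in> inputs n m"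
  unfolding marked_input_def
  by (rule pointer_input_in_inputs[OF m2 leaf_row_upd_range phi_grid]) auto

lemma pruned_input_in_inputs: "pruned_input n m \<rho> \<phi> u \<in> inputs n m"
  unfolding pruned_input_def by (rule pointer_input_in_inputs[OF m2 leaf_row_range phi_grid]) auto

lemma special_input_in_inputs:
  assumes "m div 2 < b" "b \<le> m" "r \<in> {1..n}"
  shows "special_input n m \<rho> \<phi> b r \<in> inputs n m"
proof -
  have "(r, b) \<in> grid n m" using assms unfolding grid_def by auto
  moreover have "set_option (child_ptr m ((leaf_row m \<rho>)(b := None)) (T_inner m) \<phi> q) \<subseteq> grid n m"
    for q by (rule child_ptr_in_grid[OF m2 _ phi_grid[OF order_refl]]) (rule leaf_row_upd_range)
  ultimately show ?thesis
    using marked_input_in_inputs[of b]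
    unfolding special_input_def inputs_def
    by (auto simp: valid_sym_def lpoint_def rpoint_def ipoint_def Let_def)
qed

lemma ptr_to_pointer_input_node:
  assumes "u \<in> J" "J \<subseteq> T_inner m" "\<And>j. j \<le> m div 2 \<Longrightarrow> lr j \<in> {None, Some 1}"
  shows "ptr_to d (pointer_input n m lr J \<phi> (\<phi> u)) = child_ptr m lr J \<phi> (u @ [d])"
proof -
  have "\<phi> u \<in> grid n m" "lr (snd (\<phi> u)) \<noteq> Some (fst (\<phi> u))"
    using phi_grid[of "{u}"] assms(3)[of "snd (\<phi> u)"] phi_bounds[of u] assms(1,2) by auto
  moreover have "node_at J \<phi> (\<phi> u) = u"
    using node_at_eq[of \<phi> J u] phi_inj assms(1,2) inj_on_subset by blast
  ultimately show ?thesis using assms(1)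
    by (cases d) (auto simp: pointer_input_def ptr_to_def lpoint_def rpoint_def)
qed

lemma marked_input_col:
  assumes "m div 2 < b" "c \<in> grid n m" "snd c = b"
  shows "marked_input n m \<rho> \<phi> b c = blank_sym"
proof -
  have "c \<notin> \<phi> ` T_inner m" using phi_bounds assms(1,3) by fastforce
  then show ?thesis unfolding marked_input_def pointer_input_def using assms(2,3) by auto
qed

lemma marked_input_leaf:
  assumes "j \<in> {1..m}" "j \<noteq> b" "leaf_row m \<rho> j = Some i"
  shows "marked_input n m \<rho> \<phi> b (i, j) = zero_sym"
  using assms unfolding marked_input_def pointer_input_def by auto

lemma zero_sym_in_column:
  assumes "j \<in> {1..m}" "j \<noteq> b"
  obtains i where "i \<in> {1..n}" "marked_input n m \<rho> \<phi> b (i, j) = zero_sym"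
  using leaf_row_Some[OF assms(1)] leaf_row_range marked_input_leaf[OF assms] by blast

lemma not_h1_marked_input:
  assumes "m div 2 < b"
  shows "\<not> h1 n m (marked_input n m \<rho> \<phi> b)"
proof
  assume "h1 n m (marked_input n m \<rho> \<phi> b)"
  then obtain b' a where b': "b' \<in> {1..m}" "marked_col n (marked_input n m \<rho> \<phi> b) b'"
    and a: "a \<in> grid n m" "snd a = b'" "marked_input n m \<rho> \<phi> b a \<noteq> (True, None, None, None)"
    unfolding h1_def by blast
  have "b' = b"
  proof (rule ccontr)
    assume "b' \<noteq> b"
    with b'(1) obtain i where i: "i \<in> {1..n}" "marked_input n m \<rho> \<phi> b (i, b') = zero_sym"
      by (rule zero_sym_in_column)
    have "val (marked_input n m \<rho> \<phi> b (i, b'))" using b'(2) i(1) unfolding marked_col_def by blast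
    with i(2) show False by (simp add: val_def zero_sym_def)
  qed
  then show False using marked_input_col[OF assms a(1)] a by (simp add: blank_sym_def)
qed

lemma special_input_col_b:
  assumes b: "m div 2 < b" and "c \<in> grid n m" "snd c = b" "c \<noteq> (r, b)"
  shows "special_input n m \<rho> \<phi> b r c = blank_sym"
  using assms marked_input_col[OF b] by (simp add: special_input_def Let_def)

lemma marked_col_special_input:
  assumes b: "m div 2 < b" "b \<le> m" and r: "r \<in> {1..n}" and b': "b' \<in> {1..m}"
  shows "marked_col n (special_input n m \<rho> \<phi> b r) b' \<longleftrightarrow> b' = b"
proof
  let ?x = "special_input n m \<rho> \<phi> b r"
  show "marked_col n ?x b'" if "b' = b"
    unfolding marked_col_def that
  proof
    fix i assume "i \<in> {1..n}"
    then show "val (?x (i, b))"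
    proof (cases "i = r")
      case False
      with \<open>i \<in> {1..n}\<close> b have "(i, b) \<in> grid n m" "(i, b) \<noteq> (r, b)" by (auto simp: grid_def)
      then show ?thesis using special_input_col_b[OF b(1)] by (simp add: val_def blank_sym_def)
    qed (simp add: special_input_def Let_def val_def)
  qed
  show "b' = b" if "marked_col n ?x b'"
    using that
  proof (rule contrapos_pp)
    assume "b' \<noteq> b"
    with b' obtain i where i: "i \<in> {1..n}" "marked_input n m \<rho> \<phi> b (i, b') = zero_sym"
      by (rule zero_sym_in_column)
    with \<open>b' \<noteq> b\<close> have "?x (i, b') = zero_sym" by (simp add: special_input_def Let_def)
    then have "\<not> val (?x (i, b'))" by (simp add: val_def zero_sym_def)
    with i(1) show "\<not> marked_col n ?x b'" unfolding marked_col_def by blast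
  qed
qed

lemma follow_special_input:
  assumes b: "m div 2 < b" and j: "j \<in> {1..m}" "j \<noteq> b"
  shows "\<exists>l. follow (special_input n m \<rho> \<phi> b r) (r, b) (T_path m j) = Some l \<and> snd l = j \<and>
    \<not> val (special_input n m \<rho> \<phi> b r l)"
proof -
  let ?x = "special_input n m \<rho> \<phi> b r" and ?lr = "(leaf_row m \<rho>)(b := None)"
  obtain i where i: "leaf_row m \<rho> j = Some i" using leaf_row_Some[OF j(1)] by blast
  have other: "?x c = marked_input n m \<rho> \<phi> b c" if "c \<noteq> (r, b)" for c
    using that by (simp add: special_input_def Let_def)
  have "follow ?x (r, b) (T_path m j) = Some (i, j)"
  proof (rule follow_child_ptr[OF m2 j(1), where lr = ?lr and q = "[]"])
    show "?lr j = Some i" using i j(2) by simp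
    show "ptr_to d (?x (\<phi> u)) = child_ptr m ?lr (T_inner m) \<phi> (u @ [d])" if "u \<in> T_inner m" for u d
    proof -
      have "\<phi> u \<noteq> (r, b)" using phi_bounds[OF that] b by auto
      then show ?thesis unfolding other[OF \<open>\<phi> u \<noteq> (r, b)\<close>] marked_input_def
        by (intro ptr_to_pointer_input_node[OF that]) (auto simp: leaf_row_def)
    qed
    show "ptr_to d (?x (r, b)) = child_ptr m ?lr (T_inner m) \<phi> ([] @ [d])" for d
      by (cases d) (simp_all add: special_input_def Let_def ptr_to_def lpoint_def rpoint_def)
  qed (simp_all add: Nil_in_T_inner[OF m2])
  moreover have "\<not> val (?x (i, j))"
    using marked_input_leaf[OF j i] other[of "(i, j)"] j(2) by (simp add: val_def zero_sym_def)
  ultimately show ?thesis by (intro exI[of _ "(i, j)"]) simp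
qed

lemma h1_special_input:
  assumes b: "m div 2 < b" "b \<le> m" and r: "r \<in> {1..n}"
  shows "h1 n m (special_input n m \<rho> \<phi> b r)"
proof -
  let ?x = "special_input n m \<rho> \<phi> b r"
  have bm: "b \<in> {1..m}" and a_grid: "(r, b) \<in> grid n m" using b r by (auto simp: grid_def)
  have special: "\<exists>a\<in>grid n m. snd a = b \<and> ?x a \<noteq> (True, None, None, None) \<and>
      (\<forall>a'\<in>grid n m. snd a' = b \<and> ?x a' \<noteq> (True, None, None, None) \<longrightarrow> a' = a) \<and>
      ipoint (?x a) = Some a \<and>
      (\<forall>j\<in>{1..m}. j \<noteq> b \<longrightarrow>
         (\<exists>l. follow ?x a (T_path m j) = Some l \<and> snd l = j \<and> \<not> val (?x l)))"
  proof (intro bexI[OF _ a_grid] conjI)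
    show "\<forall>a'\<in>grid n m. snd a' = b \<and> ?x a' \<noteq> (True, None, None, None) \<longrightarrow> a' = (r, b)"
      using special_input_col_b[OF b(1)] by (auto simp: blank_sym_def)
    show "\<forall>j\<in>{1..m}. j \<noteq> b \<longrightarrow>
        (\<exists>l. follow ?x (r, b) (T_path m j) = Some l \<and> snd l = j \<and> \<not> val (?x l))"
      using follow_special_input[OF b(1)] by blast
  qed (simp_all add: special_input_def Let_def ipoint_def)
  show ?thesis unfolding h1_def
  proof (intro bexI[OF _ bm] conjI)
    show "\<forall>b'\<in>{1..m}. marked_col n ?x b' \<longrightarrow> b' = b"
      using marked_col_special_input[OF b r] by blast
  qed (use marked_col_special_input[OF b r bm] special in simp_all)
qed

lemma tree_input_marked_input_agree:
  assumes b: "m div 2 < b" "b \<le> m" and c: "c \<noteq> (\<rho> b, b)" "c \<noteq> \<phi> (butlast (T_path m b))"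
  shows "tree_input n m \<rho> \<phi> c = marked_input n m \<rho> \<phi> b c"
proof -
  let ?lr = "leaf_row m \<rho>" and ?lr' = "(leaf_row m \<rho>)(b := None)"
  have lrb: "?lr b = Some (\<rho> b)" using b unfolding leaf_row_def by auto
  have zero: "(?lr (snd c) = Some (fst c)) = (?lr' (snd c) = Some (fst c))"
  proof (cases "snd c = b")
    case True
    then have "fst c \<noteq> \<rho> b" using c(1) by (metis prod.collapse)
    then show ?thesis using True lrb by simp
  qed simp
  have ptr: "child_ptr m ?lr (T_inner m) \<phi> (node_at (T_inner m) \<phi> c @ [d])
      = child_ptr m ?lr' (T_inner m) \<phi> (node_at (T_inner m) \<phi> c @ [d])"
    if "c \<in> \<phi> ` T_inner m" for d
  proof -
    let ?u = "node_at (T_inner m) \<phi> c"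
    show ?thesis
    proof (cases "?u @ [d] \<in> T_leaves m \<and> leaf_col m (?u @ [d]) = b")
      case True
      then have "butlast (T_path m b) = ?u" using leaf_col_spec[OF m2] by (metis butlast_snoc)
      then show ?thesis using node_at_in[OF that] c(2) by simp
    next
      case False
      then show ?thesis unfolding child_ptr_def by auto
    qed
  qed
  show ?thesis unfolding tree_input_def marked_input_def pointer_input_def using zero ptr by simp
qed

lemma tree_input_pruned_input_agree:
  assumes u: "u \<in> T_inner m" and c: "c \<noteq> \<phi> u" "c \<noteq> \<phi> (butlast u)"
  shows "tree_input n m \<rho> \<phi> c = pruned_input n m \<rho> \<phi> u c"
proof -
  let ?J = "T_inner m - {u}"
  have im: "(c \<in> \<phi> ` T_inner m) = (c \<in> \<phi> ` ?J)" using c(1) by auto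
  have node: "node_at (T_inner m) \<phi> c = node_at ?J \<phi> c" if c_in: "c \<in> \<phi> ` ?J"
  proof -
    obtain v where v: "v \<in> ?J" "\<phi> v = c" using c_in by blast
    then show ?thesis
      using node_at_eq[OF phi_inj, of v] node_at_eq[OF inj_on_subset[OF phi_inj], of ?J v] by auto
  qed
  have ptr: "child_ptr m (leaf_row m \<rho>) (T_inner m) \<phi> (node_at ?J \<phi> c @ [d])
      = child_ptr m (leaf_row m \<rho>) ?J \<phi> (node_at ?J \<phi> c @ [d])"
    if c_in: "c \<in> \<phi> ` ?J" for d
  proof (cases "node_at ?J \<phi> c @ [d] = u")
    case True
    then have "butlast u = node_at ?J \<phi> c" by (metis butlast_snoc)
    then show ?thesis using node_at_in[OF c_in] c(2) by simp
  next
    case False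
    then show ?thesis unfolding child_ptr_def by auto
  qed
  show ?thesis
  proof (cases "c \<in> \<phi> ` ?J")
    case True
    show ?thesis unfolding tree_input_def pruned_input_def pointer_input_def im node[OF True] ptr[OF True] ..
  next
    case False
    then show ?thesis unfolding tree_input_def pruned_input_def pointer_input_def im by simp
  qed
qed

end

section \<open>Resampling one coordinate\<close>

lemma sum_fun_upd_resample:
  fixes F :: "('a \<Rightarrow> 'b) \<Rightarrow> 'c::comm_semiring_1"
  assumes "finite S" and fin: "\<And>f. f \<in> S \<Longrightarrow> finite (R f)"
    and upd: "\<And>f y. f \<in> S \<Longrightarrow> y \<in> R f \<Longrightarrow> f(a := y) \<in> S \<and> R (f(a := y)) = R f"
    and self: "\<And>f. f \<in> S \<Longrightarrow> f a \<in> R f"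
    and card: "\<And>f. f \<in> S \<Longrightarrow> card (R f) = k"
  shows "(\<Sum>f\<in>S. \<Sum>y\<in>R f. F (f(a := y))) = of_nat k * (\<Sum>f\<in>S. F f)"
proof -
  let ?g = "\<lambda>(f, y). (f(a := y), f a)"
  have "(\<Sum>f\<in>S. \<Sum>y\<in>R f. F (f(a := y))) = (\<Sum>p\<in>Sigma S R. F (fst (?g p)))"
    using assms(1) fin by (simp add: sum.Sigma split_def)
  also have "\<dots> = (\<Sum>p\<in>Sigma S R. F (fst p))"
    by (rule sum.reindex_bij_witness[of _ ?g ?g]) (auto simp: upd self)
  also have "\<dots> = (\<Sum>f\<in>S. \<Sum>y\<in>R f. F f)"
    by (subst sum.Sigma) (use assms(1) fin in \<open>auto simp only: split_def\<close>)
  also have "\<dots> = of_nat k * (\<Sum>f\<in>S. F f)"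
    by (simp add: card sum_distrib_left)
  finally show ?thesis .
qed

lemma finite_Leaf_rows: "finite (Leaf_rows n m)"
  unfolding Leaf_rows_def by (rule finite_PiE) auto

lemma Leaf_rows_upd:
  "\<rho> \<in> Leaf_rows n m \<Longrightarrow> m div 2 < b \<Longrightarrow> b \<le> m \<Longrightarrow> i \<in> {1..n} \<Longrightarrow> \<rho>(b := i) \<in> Leaf_rows n m"
  unfolding Leaf_rows_def by (auto simp: PiE_iff extensional_def)

lemma sum_Leaf_rows_resample:
  fixes F :: "(nat \<Rightarrow> nat) \<Rightarrow> 'c::comm_semiring_1"
  assumes "m div 2 < b" "b \<le> m"
  shows "(\<Sum>\<rho>\<in>Leaf_rows n m. \<Sum>i\<in>{1..n}. F (\<rho>(b := i))) = of_nat n * (\<Sum>\<rho>\<in>Leaf_rows n m. F \<rho>)"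
  by (rule sum_fun_upd_resample)
    (use assms finite_Leaf_rows in \<open>auto simp: Leaf_rows_def PiE_iff extensional_def\<close>)

definition free_cells :: "nat \<Rightarrow> nat \<Rightarrow> (dir list \<Rightarrow> cell) \<Rightarrow> dir list \<Rightarrow> cell set" where
  "free_cells n m \<phi> u = node_cells n m - \<phi> ` (T_inner m - {u})"

definition n_free :: "nat \<Rightarrow> nat \<Rightarrow> nat" where
  "n_free n m = card (node_cells n m) - (card (T_inner m) - 1)"

lemma finite_node_cells: "finite (node_cells n m)"
  unfolding node_cells_def by simp

lemma card_node_cells: "card (node_cells n m) = (n - 1) * (m div 2)"
  unfolding node_cells_def by (simp add: card_cartesian_product)

lemma finite_Embeddings: "finite (Embeddings n m)"
proof (rule finite_subset)
  show "Embeddings n m \<subseteq> PiE (T_inner m) (\<lambda>_. node_cells n m)"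
    unfolding Embeddings_def by (auto simp: PiE_iff extensional_def)
qed (simp add: finite_PiE finite_node_cells)

lemma Embeddings_upd:
  assumes "\<phi> \<in> Embeddings n m" "u \<in> T_inner m" "c \<in> free_cells n m \<phi> u"
  shows "\<phi>(u := c) \<in> Embeddings n m"
proof -
  have "inj_on \<phi> (T_inner m - {u})" using assms(1) unfolding Embeddings_def by (auto intro: inj_on_subset)
  then have "inj_on (\<phi>(u := c)) (T_inner m - {u})" by (simp add: inj_on_def)
  moreover have "c \<notin> (\<phi>(u := c)) ` (T_inner m - {u})" using assms(3) unfolding free_cells_def by auto
  ultimately have "inj_on (\<phi>(u := c)) (insert u (T_inner m - {u}))"
    by (subst inj_on_insert) simp
  moreover have "insert u (T_inner m - {u}) = T_inner m" using assms(2) by auto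
  ultimately show ?thesis
    using assms unfolding Embeddings_def free_cells_def by (auto simp: extensional_def)
qed

lemma card_free_cells:
  assumes "\<phi> \<in> Embeddings n m" "u \<in> T_inner m"
  shows "card (free_cells n m \<phi> u) = n_free n m"
proof -
  have "inj_on \<phi> (T_inner m - {u})" and sub: "\<phi> ` (T_inner m - {u}) \<subseteq> node_cells n m"
    using assms(1) unfolding Embeddings_def by (auto intro: inj_on_subset)
  then have "card (\<phi> ` (T_inner m - {u})) = card (T_inner m) - 1"
    using card_image assms(2) by fastforce
  then show ?thesis
    unfolding free_cells_def n_free_def using card_Diff_subset[OF finite_subset[OF sub] sub]
    by (simp add: finite_node_cells)
qed

lemma sum_Embeddings_resample:
  fixes F :: "(dir list \<Rightarrow> cell) \<Rightarrow> 'c::comm_semiring_1"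
  assumes "u \<in> T_inner m"
  shows "(\<Sum>\<phi>\<in>Embeddings n m. \<Sum>c\<in>free_cells n m \<phi> u. F (\<phi>(u := c)))
       = of_nat (n_free n m) * (\<Sum>\<phi>\<in>Embeddings n m. F \<phi>)"
proof (rule sum_fun_upd_resample)
  fix \<phi> c assume "\<phi> \<in> Embeddings n m" "c \<in> free_cells n m \<phi> u"
  moreover have "(\<phi>(u := c)) ` (T_inner m - {u}) = \<phi> ` (T_inner m - {u})" by auto
  ultimately show "\<phi>(u := c) \<in> Embeddings n m \<and> free_cells n m (\<phi>(u := c)) u = free_cells n m \<phi> u"
    using Embeddings_upd assms unfolding free_cells_def by simp
next
  fix \<phi> assume "\<phi> \<in> Embeddings n m"
  then show "\<phi> u \<in> free_cells n m \<phi> u"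
    using assms unfolding Embeddings_def free_cells_def by (auto simp: inj_on_def)
qed (use assms card_free_cells in \<open>simp_all add: finite_Embeddings free_cells_def finite_node_cells\<close>)

section \<open>Counting the queries of a single decision tree\<close>

definition column :: "nat \<Rightarrow> nat \<Rightarrow> cell set" where
  "column n b = {1..n} \<times> {b}"

lemma column_eq_image: "column n b = (\<lambda>i. (i, b)) ` {1..n}"
  unfolding column_def by auto

lemma finite_column: "finite (column n b)"
  unfolding column_def by simp

lemma card_column: "card (column n b) = n"
  unfolding column_eq_image by (simp add: card_image inj_on_def)

lemma sum_column: "(\<Sum>c\<in>column n b. g c) = (\<Sum>i\<in>{1..n}. g (i, b))"
  unfolding column_eq_image by (simp add: sum.reindex inj_on_def)

lemma sum_card_column_le_length: "finite B \<Longrightarrow> (\<Sum>b\<in>B. card (set l \<inter> column n b)) \<le> length l"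
proof -
  assume "finite B"
  then have "(\<Sum>b\<in>B. card (set l \<inter> column n b)) = card (\<Union>b\<in>B. set l \<inter> column n b)"
    by (intro card_UN_disjoint[symmetric]) (auto simp: column_def)
  also have "\<dots> \<le> card (set l)" by (rule card_mono) auto
  also have "\<dots> \<le> length l" by (rule card_length)
  finally show ?thesis .
qed

lemma marked_column_queries_le:
  fixes t :: "(cell, sym) dtree"
  assumes m2: "m \<ge> 2" and n2: "n \<ge> 2" and b: "m div 2 < b" "b \<le> m"
    and \<rho>: "\<rho> \<in> Leaf_rows n m" and \<phi>: "\<phi> \<in> Embeddings n m"
  shows "n * card (set (queries t (marked_input n m \<rho> \<phi> b)) \<inter> column n b)
     \<le> 4 * (\<Sum>i\<in>{1..n}. card (set (queries t (tree_input n m (\<rho>(b := i)) \<phi>)) \<inter> column n b))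
       + n * (\<Sum>i\<in>{1..n}. of_bool (\<phi> (butlast (T_path m b)) \<in> set (queries t (tree_input n m (\<rho>(b := i)) \<phi>))))"
proof -
  define p where "p = \<phi> (butlast (T_path m b))"
  define ls where "ls c = queries t (tree_input n m (\<rho>(b := fst c)) \<phi>)" for c :: cell
  have bm: "b \<in> {1..m}" using b by auto
  have "butlast (T_path m b) \<in> T_inner m"
    using butlast_in_inner_nodes T_path_in_leaves[OF m2 bm] T_path_ne_Nil[OF m2 bm] by blast
  then have "p \<notin> column n b" using \<phi> b(1) unfolding p_def column_def Embeddings_def node_cells_def by auto
  have "upto_first {c, p} (ls c) = upto_first {c, p} (queries t (marked_input n m \<rho> \<phi> b))"
    if "c \<in> column n b" for c
    unfolding ls_def
  proof (rule upto_first_queries_agree)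
    fix z assume "z \<notin> {c, p}"
    obtain i where i: "c = (i, b)" "i \<in> {1..n}" using \<open>c \<in> column n b\<close> unfolding column_def by auto
    then have "tree_input n m (\<rho>(b := i)) \<phi> z = marked_input n m (\<rho>(b := i)) \<phi> b z"
      using tree_input_marked_input_agree[OF m2 n2 Leaf_rows_upd[OF \<rho> b i(2)] \<phi> b] \<open>z \<notin> {c, p}\<close>
      unfolding p_def by auto
    then show "tree_input n m (\<rho>(b := fst c)) \<phi> z = marked_input n m \<rho> \<phi> b z"
      using i by (simp add: marked_input_upd)
  qed
  from card_mult_le_sum_agreeing[OF finite_column this]
  show ?thesis by (simp add: card_column sum_column ls_def p_def)
qed

text \<open>A node found blindly was not reached through the pointer of its parent, so averaging over
  its position among the free cells shows that this is rare.\<close>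

definition blind ::
  "(cell, sym) dtree \<Rightarrow> nat \<Rightarrow> nat \<Rightarrow> (nat \<Rightarrow> nat) \<Rightarrow> (dir list \<Rightarrow> cell) \<Rightarrow> dir list \<Rightarrow> bool" where
  "blind t n m \<rho> \<phi> u \<longleftrightarrow>
     (if u = [] then \<phi> u \<in> set (queries t (tree_input n m \<rho> \<phi>))
      else \<phi> u \<in> set (before (\<phi> (butlast u)) (queries t (tree_input n m \<rho> \<phi>))))"

lemma blind_prefix_if_queried:
  "q \<in> T_inner m \<Longrightarrow> \<phi> q \<in> set (queries t (tree_input n m \<rho> \<phi>)) \<Longrightarrow>
    \<exists>u\<in>T_inner m. prefix u q \<and> blind t n m \<rho> \<phi> u"
proof (induction "length q" arbitrary: q rule: less_induct)
  case less
  show ?case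
  proof (cases "q = [] \<or> blind t n m \<rho> \<phi> q")
    case True
    then show ?thesis using less.prems unfolding blind_def by (intro bexI[of _ q]) auto
  next
    case False
    then have "\<phi> (butlast q) \<in> set (queries t (tree_input n m \<rho> \<phi>))"
      using mem_of_not_mem_before less.prems(2) unfolding blind_def by metis
    moreover have "butlast q \<in> T_inner m" using butlast_in_inner_nodes less.prems False by blast
    moreover have "length (butlast q) < length q" using False by simp
    ultimately obtain u where "u \<in> T_inner m" "prefix u (butlast q)" "blind t n m \<rho> \<phi> u"
      using less.hyps by blast
    then show ?thesis by (meson prefix_order.trans prefixeq_butlast)
  qed
qed

lemma parent_query_le_blind:
  assumes m2: "m \<ge> 2" and b: "b \<in> {1..m}"
  shows "(of_bool (\<phi> (butlast (T_path m b)) \<in> set (queries t (tree_input n m \<rho> \<phi>))) :: nat)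
    \<le> (\<Sum>u | u \<in> T_inner m \<and> strict_prefix u (T_path m b). of_bool (blind t n m \<rho> \<phi> u))"
proof (cases "\<phi> (butlast (T_path m b)) \<in> set (queries t (tree_input n m \<rho> \<phi>))")
  case True
  have "butlast (T_path m b) \<in> T_inner m"
    using butlast_in_inner_nodes T_path_in_leaves[OF m2 b] T_path_ne_Nil[OF m2 b] by blast
  then obtain u where u: "u \<in> T_inner m" "prefix u (butlast (T_path m b))" "blind t n m \<rho> \<phi> u"
    using blind_prefix_if_queried True by blast
  have "strict_prefix (butlast (T_path m b)) (T_path m b)"
    using T_path_ne_Nil[OF m2 b] by (metis append_butlast_last_id strict_prefixI')
  with u(2) have "strict_prefix u (T_path m b)" by (meson prefix_order.le_less_trans)
  then have "(of_bool (blind t n m \<rho> \<phi> u) :: nat)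
      \<le> (\<Sum>u | u \<in> T_inner m \<and> strict_prefix u (T_path m b). of_bool (blind t n m \<rho> \<phi> u))"
    using u(1) by (intro member_le_sum) auto
  then show ?thesis using u(3) True by simp
qed simp

lemma sum_blind_le_cost:
  assumes m2: "m \<ge> 2" and n2: "n \<ge> 2" and \<rho>: "\<rho> \<in> Leaf_rows n m"
    and \<phi>: "\<phi> \<in> Embeddings n m" and u: "u \<in> T_inner m"
  shows "(\<Sum>c\<in>free_cells n m \<phi> u. of_bool (blind t n m \<rho> (\<phi>(u := c)) u)) \<le> dt_cost t (pruned_input n m \<rho> \<phi> u)"
proof -
  let ?Q = "set (queries t (pruned_input n m \<rho> \<phi> u))"
  have "c \<in> ?Q" if c: "c \<in> free_cells n m \<phi> u" "blind t n m \<rho> (\<phi>(u := c)) u" for c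
  proof -
    let ?\<psi> = "\<phi>(u := c)"
    let ?D = "{c, ?\<psi> (butlast u)}"
    have \<psi>: "?\<psi> \<in> Embeddings n m" using Embeddings_upd[OF \<phi> u c(1)] .
    have "tree_input n m \<rho> ?\<psi> z = pruned_input n m \<rho> \<phi> u z" if "z \<notin> ?D" for z
    proof -
      have "tree_input n m \<rho> ?\<psi> z = pruned_input n m \<rho> ?\<psi> u z"
        by (rule tree_input_pruned_input_agree[OF m2 n2 \<rho> \<psi> u]) (use that in auto)
      then show ?thesis by (simp add: pruned_input_upd)
    qed
    then have agree: "upto_first ?D (queries t (tree_input n m \<rho> ?\<psi>)) = upto_first ?D (queries t (pruned_input n m \<rho> \<phi> u))"
      by (rule upto_first_queries_agree)
    have "c \<in> set (upto_first ?D (queries t (tree_input n m \<rho> ?\<psi>)))"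
    proof (cases "u = []")
      case True
      then show ?thesis using c(2) mem_upto_first_singleton unfolding blind_def by auto
    next
      case False
      then have "c \<in> set (before (?\<psi> (butlast u)) (queries t (tree_input n m \<rho> ?\<psi>)))"
        using c(2) unfolding blind_def by simp
      then show ?thesis by (rule mem_upto_first_if_before)
    qed
    then show "c \<in> ?Q" using agree set_upto_first by (metis subsetD)
  qed
  then have "card (free_cells n m \<phi> u \<inter> {c. blind t n m \<rho> (\<phi>(u := c)) u}) \<le> card ?Q"
    by (intro card_mono) auto
  also have "\<dots> \<le> dt_cost t (pruned_input n m \<rho> \<phi> u)"
    using card_length length_queries by metis
  finally show ?thesis
    by (simp add: free_cells_def finite_node_cells)
qed

definition right_half :: "nat \<Rightarrow> nat set" where
  "right_half m = {m div 2 + 1..m}"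

definition n_below :: "nat \<Rightarrow> dir list \<Rightarrow> nat" where
  "n_below m u = card {b \<in> right_half m. strict_prefix u (T_path m b)}"

lemma sum_marked_column_queries_le:
  fixes t :: "(cell, sym) dtree"
  assumes m2: "m \<ge> 2" and n2: "n \<ge> 2" and b: "m div 2 < b" "b \<le> m" and \<phi>: "\<phi> \<in> Embeddings n m"
  shows "(\<Sum>\<rho>\<in>Leaf_rows n m. card (set (queries t (marked_input n m \<rho> \<phi> b)) \<inter> column n b))
    \<le> 4 * (\<Sum>\<rho>\<in>Leaf_rows n m. card (set (queries t (tree_input n m \<rho> \<phi>)) \<inter> column n b))
      + n * (\<Sum>\<rho>\<in>Leaf_rows n m. of_bool (\<phi> (butlast (T_path m b)) \<in> set (queries t (tree_input n m \<rho> \<phi>))))"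
proof -
  let ?col = "\<lambda>\<rho>. card (set (queries t (tree_input n m \<rho> \<phi>)) \<inter> column n b)"
  let ?par = "\<lambda>\<rho>. of_bool (\<phi> (butlast (T_path m b)) \<in> set (queries t (tree_input n m \<rho> \<phi>))) :: nat"
  have "n * (\<Sum>\<rho>\<in>Leaf_rows n m. card (set (queries t (marked_input n m \<rho> \<phi> b)) \<inter> column n b))
      = (\<Sum>\<rho>\<in>Leaf_rows n m. n * card (set (queries t (marked_input n m \<rho> \<phi> b)) \<inter> column n b))"
    by (simp add: sum_distrib_left)
  also have "\<dots> \<le> (\<Sum>\<rho>\<in>Leaf_rows n m.
      4 * (\<Sum>i\<in>{1..n}. ?col (\<rho>(b := i))) + n * (\<Sum>i\<in>{1..n}. ?par (\<rho>(b := i))))"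
    by (intro sum_mono marked_column_queries_le[OF m2 n2 b _ \<phi>])
  also have "\<dots> = 4 * (\<Sum>\<rho>\<in>Leaf_rows n m. \<Sum>i\<in>{1..n}. ?col (\<rho>(b := i)))
      + n * (\<Sum>\<rho>\<in>Leaf_rows n m. \<Sum>i\<in>{1..n}. ?par (\<rho>(b := i)))"
    by (simp add: sum.distrib sum_distrib_left)
  also have "\<dots> = 4 * (n * (\<Sum>\<rho>\<in>Leaf_rows n m. ?col \<rho>)) + n * (n * (\<Sum>\<rho>\<in>Leaf_rows n m. ?par \<rho>))"
    using sum_Leaf_rows_resample[OF b, where F = ?col] sum_Leaf_rows_resample[OF b, where F = ?par]
    by (simp del: sum_of_bool_eq)
  also have "\<dots> = n * (4 * (\<Sum>\<rho>\<in>Leaf_rows n m. ?col \<rho>) + n * (\<Sum>\<rho>\<in>Leaf_rows n m. ?par \<rho>))"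
    by (simp add: algebra_simps)
  finally show ?thesis using n2 by (simp add: mult_le_cancel1)
qed

lemma sum_parent_queries_le_blind:
  assumes "m \<ge> 2"
  shows "(\<Sum>b\<in>right_half m. \<Sum>\<phi>\<in>Embeddings n m. \<Sum>\<rho>\<in>Leaf_rows n m.
            of_bool (\<phi> (butlast (T_path m b)) \<in> set (queries t (tree_input n m \<rho> \<phi>))))
    \<le> (\<Sum>u\<in>T_inner m. n_below m u *
          (\<Sum>\<phi>\<in>Embeddings n m. \<Sum>\<rho>\<in>Leaf_rows n m. of_bool (blind t n m \<rho> \<phi> u)))"
proof -
  let ?bl = "\<lambda>u \<rho> \<phi>. of_bool (blind t n m \<rho> \<phi> u) :: nat"
  let ?anc = "\<lambda>b. {u \<in> T_inner m. strict_prefix u (T_path m b)}"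
  have "(\<Sum>b\<in>right_half m. \<Sum>\<phi>\<in>Embeddings n m. \<Sum>\<rho>\<in>Leaf_rows n m.
            of_bool (\<phi> (butlast (T_path m b)) \<in> set (queries t (tree_input n m \<rho> \<phi>))))
      \<le> (\<Sum>b\<in>right_half m. \<Sum>\<phi>\<in>Embeddings n m. \<Sum>\<rho>\<in>Leaf_rows n m. \<Sum>u\<in>?anc b. ?bl u \<rho> \<phi>)"
    using parent_query_le_blind[OF assms] by (intro sum_mono) (auto simp: right_half_def)
  also have "\<dots> = (\<Sum>b\<in>right_half m. \<Sum>u\<in>?anc b. \<Sum>\<phi>\<in>Embeddings n m. \<Sum>\<rho>\<in>Leaf_rows n m. ?bl u \<rho> \<phi>)"
    by (intro sum.cong refl) (simp add: sum.swap[of _ _ "?anc _"] sum.swap[of _ "Leaf_rows n m"])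
  also have "\<dots> = (\<Sum>u\<in>T_inner m. \<Sum>b\<in>{b \<in> right_half m. strict_prefix u (T_path m b)}.
      \<Sum>\<phi>\<in>Embeddings n m. \<Sum>\<rho>\<in>Leaf_rows n m. ?bl u \<rho> \<phi>)"
    by (rule sum.swap_restrict) (simp_all add: right_half_def)
  also have "\<dots> = (\<Sum>u\<in>T_inner m. n_below m u * (\<Sum>\<phi>\<in>Embeddings n m. \<Sum>\<rho>\<in>Leaf_rows n m. ?bl u \<rho> \<phi>))"
    unfolding n_below_def by simp
  finally show ?thesis .
qed

lemma sum_blind_le_sum_cost:
  assumes m2: "m \<ge> 2" and n2: "n \<ge> 2" and u: "u \<in> T_inner m"
  shows "n_free n m * (\<Sum>\<phi>\<in>Embeddings n m. \<Sum>\<rho>\<in>Leaf_rows n m. of_bool (blind t n m \<rho> \<phi> u))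
    \<le> (\<Sum>\<phi>\<in>Embeddings n m. \<Sum>\<rho>\<in>Leaf_rows n m. dt_cost t (pruned_input n m \<rho> \<phi> u))"
proof -
  let ?bl = "\<lambda>\<rho> \<phi>. of_bool (blind t n m \<rho> \<phi> u) :: nat"
  have "n_free n m * (\<Sum>\<phi>\<in>Embeddings n m. \<Sum>\<rho>\<in>Leaf_rows n m. ?bl \<rho> \<phi>)
      = (\<Sum>\<rho>\<in>Leaf_rows n m. n_free n m * (\<Sum>\<phi>\<in>Embeddings n m. ?bl \<rho> \<phi>))"
    by (subst sum.swap) (simp add: sum_distrib_left)
  also have "\<dots> = (\<Sum>\<rho>\<in>Leaf_rows n m. \<Sum>\<phi>\<in>Embeddings n m. \<Sum>c\<in>free_cells n m \<phi> u. ?bl \<rho> (\<phi>(u := c)))"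
    using sum_Embeddings_resample[OF u, where F = "?bl _"] by simp
  also have "\<dots> \<le> (\<Sum>\<rho>\<in>Leaf_rows n m. \<Sum>\<phi>\<in>Embeddings n m. dt_cost t (pruned_input n m \<rho> \<phi> u))"
    by (intro sum_mono sum_blind_le_cost[OF m2 n2 _ _ u])
  also have "\<dots> = (\<Sum>\<phi>\<in>Embeddings n m. \<Sum>\<rho>\<in>Leaf_rows n m. dt_cost t (pruned_input n m \<rho> \<phi> u))"
    by (rule sum.swap)
  finally show ?thesis .
qed

lemma per_tree_bound:
  fixes t :: "(cell, sym) dtree"
  assumes m2: "m \<ge> 2" and n2: "n \<ge> 2"
  shows "n_free n m * (\<Sum>b\<in>right_half m. \<Sum>\<phi>\<in>Embeddings n m. \<Sum>\<rho>\<in>Leaf_rows n m.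
            card (set (queries t (marked_input n m \<rho> \<phi> b)) \<inter> column n b))
    \<le> 4 * n_free n m * (\<Sum>\<phi>\<in>Embeddings n m. \<Sum>\<rho>\<in>Leaf_rows n m. dt_cost t (tree_input n m \<rho> \<phi>))
      + n * (\<Sum>u\<in>T_inner m. n_below m u *
               (\<Sum>\<phi>\<in>Embeddings n m. \<Sum>\<rho>\<in>Leaf_rows n m. dt_cost t (pruned_input n m \<rho> \<phi> u)))"
proof -
  let ?col = "\<lambda>b \<rho> \<phi>. card (set (queries t (tree_input n m \<rho> \<phi>)) \<inter> column n b)"
  let ?par = "\<lambda>b \<rho> \<phi>. of_bool (\<phi> (butlast (T_path m b)) \<in> set (queries t (tree_input n m \<rho> \<phi>))) :: nat"
  define bl where "bl u = (\<Sum>\<phi>\<in>Embeddings n m. \<Sum>\<rho>\<in>Leaf_rows n m. of_bool (blind t n m \<rho> \<phi> u) :: nat)"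
    for u
  let ?cost = "\<Sum>\<phi>\<in>Embeddings n m. \<Sum>\<rho>\<in>Leaf_rows n m. dt_cost t (tree_input n m \<rho> \<phi>)"
  have cost: "(\<Sum>b\<in>right_half m. ?col b \<rho> \<phi>) \<le> dt_cost t (tree_input n m \<rho> \<phi>)" for \<rho> \<phi>
    using sum_card_column_le_length[of "right_half m" "queries t (tree_input n m \<rho> \<phi>)" n]
    by (simp add: right_half_def length_queries)
  have "(\<Sum>b\<in>right_half m. \<Sum>\<phi>\<in>Embeddings n m. \<Sum>\<rho>\<in>Leaf_rows n m.
            card (set (queries t (marked_input n m \<rho> \<phi> b)) \<inter> column n b))
      \<le> (\<Sum>b\<in>right_half m. \<Sum>\<phi>\<in>Embeddings n m.
            4 * (\<Sum>\<rho>\<in>Leaf_rows n m. ?col b \<rho> \<phi>) + n * (\<Sum>\<rho>\<in>Leaf_rows n m. ?par b \<rho> \<phi>))"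
    by (intro sum_mono sum_marked_column_queries_le[OF m2 n2]) (auto simp: right_half_def)
  also have "\<dots> = 4 * (\<Sum>\<phi>\<in>Embeddings n m. \<Sum>\<rho>\<in>Leaf_rows n m. \<Sum>b\<in>right_half m. ?col b \<rho> \<phi>)
      + n * (\<Sum>b\<in>right_half m. \<Sum>\<phi>\<in>Embeddings n m. \<Sum>\<rho>\<in>Leaf_rows n m. ?par b \<rho> \<phi>)"
    by (simp add: sum.distrib sum_distrib_left sum.swap[of _ "right_half m"]
        sum.swap[of _ "right_half m" "Leaf_rows n m"])
  also have "\<dots> \<le> 4 * ?cost + n * (\<Sum>u\<in>T_inner m. n_below m u * bl u)"
    unfolding bl_def
    by (intro add_mono mult_le_mono2 sum_mono sum_parent_queries_le_blind[OF m2] cost)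
  finally have "n_free n m * (\<Sum>b\<in>right_half m. \<Sum>\<phi>\<in>Embeddings n m. \<Sum>\<rho>\<in>Leaf_rows n m.
            card (set (queries t (marked_input n m \<rho> \<phi> b)) \<inter> column n b))
      \<le> n_free n m * (4 * ?cost + n * (\<Sum>u\<in>T_inner m. n_below m u * bl u))"
    by (rule mult_le_mono2)
  also have "\<dots> = 4 * n_free n m * ?cost + n * (\<Sum>u\<in>T_inner m. n_below m u * (n_free n m * bl u))"
    by (simp add: algebra_simps sum_distrib_left)
  also have "\<dots> \<le> 4 * n_free n m * ?cost + n * (\<Sum>u\<in>T_inner m. n_below m u *
      (\<Sum>\<phi>\<in>Embeddings n m. \<Sum>\<rho>\<in>Leaf_rows n m. dt_cost t (pruned_input n m \<rho> \<phi> u)))"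
    unfolding bl_def by (intro add_left_mono mult_le_mono2 sum_mono sum_blind_le_sum_cost[OF m2 n2])
  finally show ?thesis .
qed

section \<open>Averaging over the hard inputs\<close>

lemma prob_query_if_sensitive:
  assumes D: "rdt_correct X f D" and "x \<in> X" "y \<in> X" "f x \<noteq> f y"
    and agree: "\<And>z. z \<notin> C \<Longrightarrow> x z = y z"
  shows "measure_pmf.prob D {t. set (queries t x) \<inter> C \<noteq> {}} \<ge> 4/5"
proof -
  let ?Q = "{t. set (queries t x) \<inter> C \<noteq> {}}"
  let ?A = "{t. dt_eval t x = f x}" and ?B = "{t. dt_eval t y = f y}"
  have "dt_eval t x = dt_eval t y" if "set (queries t x) \<inter> C = {}" for t
    by (rule dt_eval_agree[OF agree that])
  then have "UNIV - ?Q \<subseteq> (UNIV - ?A) \<union> (UNIV - ?B)"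
    using \<open>f x \<noteq> f y\<close> by auto
  then have "measure_pmf.prob D (UNIV - ?Q) \<le> measure_pmf.prob D ((UNIV - ?A) \<union> (UNIV - ?B))"
    by (intro measure_pmf.finite_measure_mono) auto
  also have "\<dots> \<le> measure_pmf.prob D (UNIV - ?A) + measure_pmf.prob D (UNIV - ?B)"
    by (rule measure_Un_le) auto
  finally have "1 - measure_pmf.prob D ?Q \<le> (1 - measure_pmf.prob D ?A) + (1 - measure_pmf.prob D ?B)"
    using measure_pmf.prob_compl[of ?A D] measure_pmf.prob_compl[of ?B D]
      measure_pmf.prob_compl[of ?Q D] by simp
  moreover have "measure_pmf.prob D ?A \<ge> 9/10" "measure_pmf.prob D ?B \<ge> 9/10"
    using D \<open>x \<in> X\<close> \<open>y \<in> X\<close> unfolding rdt_correct_def by blast+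
  ultimately show ?thesis by linarith
qed

lemma prob_query_marked_cell:
  assumes D: "rdt_correct (inputs n m) (h1 n m) D" and m2: "m \<ge> 2" and n2: "n \<ge> 2"
    and b: "m div 2 < b" "b \<le> m" and \<rho>: "\<rho> \<in> Leaf_rows n m" and \<phi>: "\<phi> \<in> Embeddings n m"
    and i: "i \<in> {1..n}"
  shows "measure_pmf.prob D {t. (i, b) \<in> set (queries t (marked_input n m \<rho> \<phi> b))} \<ge> 4/5"
proof -
  note hard = m2 n2 \<rho> \<phi>
  have "measure_pmf.prob D {t. set (queries t (marked_input n m \<rho> \<phi> b)) \<inter> {(i, b)} \<noteq> {}} \<ge> 4/5"
  proof (rule prob_query_if_sensitive[OF D])
    show "h1 n m (marked_input n m \<rho> \<phi> b) \<noteq> h1 n m (special_input n m \<rho> \<phi> b i)"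
      using not_h1_marked_input[OF hard b(1)] h1_special_input[OF hard b i] by blast
  qed (use marked_input_in_inputs[OF hard] special_input_in_inputs[OF hard b i] in
       \<open>auto simp: special_input_def Let_def\<close>)
  then show ?thesis by simp
qed

lemma expected_card_queries_ge:
  assumes "finite C" "0 \<le> p" "\<And>c. c \<in> C \<Longrightarrow> p \<le> measure_pmf.prob D {t. c \<in> set (queries t x)}"
  shows "ennreal (p * card C) \<le> (\<integral>\<^sup>+ t. of_nat (card (set (queries t x) \<inter> C)) \<partial>measure_pmf D)"
proof -
  have "ennreal (p * card C) = (\<Sum>c\<in>C. ennreal p)"
    using \<open>0 \<le> p\<close> by (simp add: ennreal_mult' ennreal_of_nat_eq_real_of_nat mult.commute)
  also have "\<dots> \<le> (\<Sum>c\<in>C. emeasure (measure_pmf D) {t. c \<in> set (queries t x)})"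
    using assms(3) by (intro sum_mono) (simp add: measure_pmf.emeasure_eq_measure)
  also have "\<dots> = (\<integral>\<^sup>+ t. (\<Sum>c\<in>C. indicator {t. c \<in> set (queries t x)} t) \<partial>measure_pmf D)"
    by (simp add: nn_integral_sum)
  also have "\<dots> = (\<integral>\<^sup>+ t. of_nat (card (set (queries t x) \<inter> C)) \<partial>measure_pmf D)"
    using \<open>finite C\<close> by (intro nn_integral_cong) (simp add: indicator_def of_bool_def[symmetric] Int_commute)
  finally show ?thesis .
qed

lemma expected_marked_column_queries:
  assumes D: "rdt_correct (inputs n m) (h1 n m) D" and m2: "m \<ge> 2" and n2: "n \<ge> 2"
    and b: "m div 2 < b" "b \<le> m" and \<rho>: "\<rho> \<in> Leaf_rows n m" and \<phi>: "\<phi> \<in> Embeddings n m"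
  shows "ennreal (4/5 * n)
    \<le> (\<integral>\<^sup>+ t. of_nat (card (set (queries t (marked_input n m \<rho> \<phi> b)) \<inter> column n b)) \<partial>measure_pmf D)"
proof -
  have "ennreal (4/5 * card (column n b))
      \<le> (\<integral>\<^sup>+ t. of_nat (card (set (queries t (marked_input n m \<rho> \<phi> b)) \<inter> column n b)) \<partial>measure_pmf D)"
    by (rule expected_card_queries_ge[OF finite_column])
      (use prob_query_marked_cell[OF D m2 n2 b \<rho> \<phi>] in \<open>auto simp: column_def\<close>)
  then show ?thesis by (simp add: card_column)
qed

lemma nn_integral_pmf_of_nat_sum:
  "(\<integral>\<^sup>+ t. of_nat (\<Sum>i\<in>I. f i t) \<partial>measure_pmf D) = (\<Sum>i\<in>I. \<integral>\<^sup>+ t. of_nat (f i t) \<partial>measure_pmf D)"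
  by (simp add: of_nat_sum nn_integral_sum)

lemma nn_integral_pmf_of_nat_add:
  "(\<integral>\<^sup>+ t. of_nat (f t + g t) \<partial>measure_pmf D)
   = (\<integral>\<^sup>+ t. of_nat (f t) \<partial>measure_pmf D) + (\<integral>\<^sup>+ t. of_nat (g t) \<partial>measure_pmf D)"
  by (simp add: nn_integral_add)

lemma nn_integral_pmf_of_nat_cmult:
  "(\<integral>\<^sup>+ t. of_nat (c * f t) \<partial>measure_pmf D) = of_nat c * (\<integral>\<^sup>+ t. of_nat (f t) \<partial>measure_pmf D)"
  by (simp add: nn_integral_cmult)

lemma expected_cost_le_rdt_cost:
  "x \<in> X \<Longrightarrow> (\<integral>\<^sup>+ t. of_nat (dt_cost t x) \<partial>measure_pmf D) \<le> rdt_cost X D"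
  unfolding rdt_cost_def by (auto intro!: SUP_upper2 simp: ennreal_of_nat_eq_real_of_nat)

lemma Embeddings_nonempty:
  assumes "m \<ge> 2" "n \<ge> 3"
  shows "Embeddings n m \<noteq> {}"
proof -
  have "card (T_inner m) \<le> 2 * (m div 2)" using card_T_inner[OF assms(1)] by linarith
  also have "\<dots> \<le> card (node_cells n m)"
    unfolding card_node_cells using assms(2) by (intro mult_right_mono) auto
  finally obtain f where "f ` T_inner m \<subseteq> node_cells n m" "inj_on f (T_inner m)"
    using card_le_inj[OF finite_inner_nodes finite_node_cells] by blast
  then have "restrict f (T_inner m) \<in> Embeddings n m"
    unfolding Embeddings_def by (auto simp: inj_on_def)
  then show ?thesis by blast
qed

lemma Leaf_rows_nonempty: "n \<ge> 1 \<Longrightarrow> Leaf_rows n m \<noteq> {}"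
  unfolding Leaf_rows_def by (auto simp: PiE_eq_empty_iff)

lemma expected_sum_marked_column_queries:
  assumes D: "rdt_correct (inputs n m) (h1 n m) D" and m2: "m \<ge> 2" and n2: "n \<ge> 2"
  shows "of_nat (card (Embeddings n m) * card (Leaf_rows n m)) * ennreal (4/5 * n * card (right_half m))
    \<le> (\<integral>\<^sup>+ t. of_nat (\<Sum>b\<in>right_half m. \<Sum>\<phi>\<in>Embeddings n m. \<Sum>\<rho>\<in>Leaf_rows n m.
          card (set (queries t (marked_input n m \<rho> \<phi> b)) \<inter> column n b)) \<partial>measure_pmf D)"
proof -
  have "of_nat (card (Embeddings n m) * card (Leaf_rows n m)) * ennreal (4/5 * n * card (right_half m))
      = (\<Sum>b\<in>right_half m. \<Sum>\<phi>\<in>Embeddings n m. \<Sum>\<rho>\<in>Leaf_rows n m. ennreal (4/5 * n))"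
    by (simp add: ennreal_of_nat_eq_real_of_nat ennreal_mult[symmetric] mult_ac)
  also have "\<dots> \<le> (\<Sum>b\<in>right_half m. \<Sum>\<phi>\<in>Embeddings n m. \<Sum>\<rho>\<in>Leaf_rows n m.
      \<integral>\<^sup>+ t. of_nat (card (set (queries t (marked_input n m \<rho> \<phi> b)) \<inter> column n b)) \<partial>measure_pmf D)"
    by (intro sum_mono expected_marked_column_queries[OF D m2 n2]) (auto simp: right_half_def)
  finally show ?thesis by (simp only: nn_integral_pmf_of_nat_sum)
qed

lemma expected_sum_costs:
  assumes m2: "m \<ge> 2" and n2: "n \<ge> 2"
  shows "(\<integral>\<^sup>+ t. of_nat (4 * n_free n m * (\<Sum>\<phi>\<in>Embeddings n m. \<Sum>\<rho>\<in>Leaf_rows n m. dt_cost t (tree_input n m \<rho> \<phi>))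
      + n * (\<Sum>u\<in>T_inner m. n_below m u *
               (\<Sum>\<phi>\<in>Embeddings n m. \<Sum>\<rho>\<in>Leaf_rows n m. dt_cost t (pruned_input n m \<rho> \<phi> u))))
      \<partial>measure_pmf D)
    \<le> of_nat (card (Embeddings n m) * card (Leaf_rows n m))
      * (of_nat (4 * n_free n m + n * (\<Sum>u\<in>T_inner m. n_below m u)) * rdt_cost (inputs n m) D)"
    (is "?I \<le> _")
proof -
  let ?K = "rdt_cost (inputs n m) D"
  have "?I = of_nat (4 * n_free n m) * (\<Sum>\<phi>\<in>Embeddings n m. \<Sum>\<rho>\<in>Leaf_rows n m.
        \<integral>\<^sup>+ t. of_nat (dt_cost t (tree_input n m \<rho> \<phi>)) \<partial>measure_pmf D)
      + of_nat n * (\<Sum>u\<in>T_inner m. of_nat (n_below m u) * (\<Sum>\<phi>\<in>Embeddings n m. \<Sum>\<rho>\<in>Leaf_rows n m.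
        \<integral>\<^sup>+ t. of_nat (dt_cost t (pruned_input n m \<rho> \<phi> u)) \<partial>measure_pmf D))"
    by (simp only: nn_integral_pmf_of_nat_add nn_integral_pmf_of_nat_cmult nn_integral_pmf_of_nat_sum)
  also have "\<dots> \<le> of_nat (4 * n_free n m) * (\<Sum>\<phi>\<in>Embeddings n m. \<Sum>\<rho>\<in>Leaf_rows n m. ?K)
      + of_nat n * (\<Sum>u\<in>T_inner m. of_nat (n_below m u) * (\<Sum>\<phi>\<in>Embeddings n m. \<Sum>\<rho>\<in>Leaf_rows n m. ?K))"
    by (intro add_mono mult_left_mono sum_mono expected_cost_le_rdt_cost
        tree_input_in_inputs[OF m2 n2] pruned_input_in_inputs[OF m2 n2]) auto
  also have "\<dots> = of_nat (card (Embeddings n m) * card (Leaf_rows n m))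
      * (of_nat (4 * n_free n m + n * (\<Sum>u\<in>T_inner m. n_below m u)) * ?K)"
    by (simp add: algebra_simps sum_distrib_left sum_distrib_right of_nat_sum)
  finally show ?thesis .
qed

lemma averaged_cost_bound:
  assumes D: "rdt_correct (inputs n m) (h1 n m) D" and m2: "m \<ge> 2" and n3: "n \<ge> 3"
  shows "ennreal (4/5 * n * card (right_half m) * n_free n m)
    \<le> ennreal (4 * n_free n m + n * (\<Sum>u\<in>T_inner m. n_below m u)) * rdt_cost (inputs n m) D"
proof -
  have n2: "n \<ge> 2" using n3 by simp
  let ?N = "card (Embeddings n m) * card (Leaf_rows n m)"
  let ?marked = "\<lambda>t. \<Sum>b\<in>right_half m. \<Sum>\<phi>\<in>Embeddings n m. \<Sum>\<rho>\<in>Leaf_rows n m.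
      card (set (queries t (marked_input n m \<rho> \<phi> b)) \<inter> column n b)"
  have "of_nat ?N * ennreal (4/5 * n * card (right_half m) * n_free n m)
      = of_nat (n_free n m) * (of_nat ?N * ennreal (4/5 * n * card (right_half m)))"
    by (simp add: ennreal_of_nat_eq_real_of_nat ennreal_mult[symmetric] mult_ac)
  also have "\<dots> \<le> of_nat (n_free n m) * (\<integral>\<^sup>+ t. of_nat (?marked t) \<partial>measure_pmf D)"
    by (intro mult_left_mono expected_sum_marked_column_queries[OF D m2 n2]) simp
  also have "\<dots> = (\<integral>\<^sup>+ t. of_nat (n_free n m * ?marked t) \<partial>measure_pmf D)"
    by (simp only: nn_integral_pmf_of_nat_cmult)
  also have "\<dots> \<le> (\<integral>\<^sup>+ t. of_nat (4 * n_free n m * (\<Sum>\<phi>\<in>Embeddings n m. \<Sum>\<rho>\<in>Leaf_rows n m.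
        dt_cost t (tree_input n m \<rho> \<phi>)) + n * (\<Sum>u\<in>T_inner m. n_below m u *
        (\<Sum>\<phi>\<in>Embeddings n m. \<Sum>\<rho>\<in>Leaf_rows n m. dt_cost t (pruned_input n m \<rho> \<phi> u))))
      \<partial>measure_pmf D)"
    by (intro nn_integral_mono of_nat_mono per_tree_bound[OF m2 n2])
  also have "\<dots> \<le> of_nat ?N
      * (of_nat (4 * n_free n m + n * (\<Sum>u\<in>T_inner m. n_below m u)) * rdt_cost (inputs n m) D)"
    by (rule expected_sum_costs[OF m2 n2])
  finally have "of_nat ?N * ennreal (4/5 * n * card (right_half m) * n_free n m)
      \<le> of_nat ?N * (ennreal (4 * n_free n m + n * (\<Sum>u\<in>T_inner m. n_below m u)) * rdt_cost (inputs n m) D)"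
    by (simp add: ennreal_of_nat_eq_real_of_nat)
  moreover have "(of_nat ?N :: ennreal) \<noteq> 0"
    using Embeddings_nonempty[OF m2 n3] Leaf_rows_nonempty[of n m] n3 finite_Embeddings finite_Leaf_rows
    by (simp del: of_nat_mult)
  ultimately show ?thesis by (metis ennreal_mult_le_mult_iff ennreal_of_nat_neq_top)
qed

lemma card_strict_prefixes_le: "card {u \<in> A. strict_prefix u p} \<le> length p"
proof -
  have "{u \<in> A. strict_prefix u p} \<subseteq> set (prefixes p) - {p}"
    by (auto simp: strict_prefix_def)
  then have "card {u \<in> A. strict_prefix u p} \<le> card (set (prefixes p) - {p})"
    by (rule card_mono[rotated]) simp
  then show ?thesis by simp
qed

lemma sum_n_below_le:
  assumes "\<forall>j\<in>{1..m}. length (T_path m j) \<le> Suc r"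
  shows "(\<Sum>u\<in>T_inner m. n_below m u) \<le> card (right_half m) * Suc r"
proof -
  have "(\<Sum>u\<in>T_inner m. n_below m u) = (\<Sum>b\<in>right_half m. card {u \<in> T_inner m. strict_prefix u (T_path m b)})"
    unfolding n_below_def card_eq_sum by (rule sum.swap_restrict) (simp_all add: right_half_def)
  also have "\<dots> \<le> (\<Sum>b\<in>right_half m. Suc r)"
    using card_strict_prefixes_le[of "T_inner m"] assms
    by (intro sum_mono) (force simp: right_half_def intro: le_trans)
  finally show ?thesis by simp
qed

lemma n_free_ge:
  assumes n: "12 \<le> n" and m: "12 \<le> m"
  shows "real n * real m \<le> 4 * real (n_free n m)"
proof -
  define h where "h = real (m div 2)"
  have "m - 2 \<le> 2 * (m div 2)" "2 * (m div 2) \<le> (n - 1) * (m div 2)"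
    using n by (linarith, intro mult_right_mono) auto
  moreover have "n_free n m = (n - 1) * (m div 2) - (m - 2)"
    using card_T_inner[of m] m unfolding n_free_def card_node_cells by (simp only: diff_diff_left)
  ultimately have "real (n_free n m) = real ((n - 1) * (m div 2)) - real (m - 2)"
    by (simp only: of_nat_diff[OF le_trans])
  also have "\<dots> = (real n - 1) * h - (real m - 2)"
    using n m unfolding h_def by (simp add: of_nat_diff)
  finally have "4 * real (n_free n m) = 2 * ((real n - 1) * (2 * h)) - 4 * (real m - 2)"
    by (simp add: algebra_simps)
  moreover have "(real n - 1) * (real m - 1) \<le> (real n - 1) * (2 * h)"
    using n unfolding h_def by (intro mult_left_mono) linarith+
  moreover have "6 * 10 \<le> (real n - 6) * (real m - 2)"
    using n m by (intro mult_mono) auto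
  ultimately show ?thesis by (simp add: algebra_simps)
qed

lemma ln_2_ge_half: "ln (2::real) \<ge> 1/2"
  using ln_one_minus_pos_upper_bound[of "1/2 :: real"] by (simp add: ln_div)

lemma log_le_ln:
  assumes "4 \<le> m" "2 ^ r \<le> m"
  shows "real r + 2 \<le> 4 * ln (real m)"
proof -
  have "ln (2 ^ r) \<le> ln (real m)" "ln (2 ^ 2) \<le> ln (real m)"
    using assms by (simp_all add: of_nat_le_iff[symmetric, of "2 ^ r"])
  then have "real r * ln 2 \<le> ln (real m)" "2 * ln 2 \<le> ln (real m)"
    by (simp_all only: ln_realpow)
  then show ?thesis
    using ln_2_ge_half mult_left_mono[OF ln_2_ge_half, of "real r"] by linarith
qed

lemma lower_bound_arith:
  fixes n m S F W k r l :: real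
  assumes n: "n \<ge> 12" and m: "m \<ge> 12" and S: "m \<le> 2 * S" "S \<le> m" and F: "n * m \<le> 4 * F"
    and W: "W \<le> S * (r + 1)" and k: "k \<ge> 0" and r: "r \<ge> 0" and l: "r + 2 \<le> 4 * l"
    and bound: "4/5 * n * S * F \<le> (4 * F + n * W) * k"
  shows "n * m / (40 * l) \<le> k"
proof -
  have "n * W \<le> n * (S * (r + 1))" using W n by (intro mult_left_mono) auto
  also have "\<dots> \<le> n * (m * (r + 1))" using S r n by (intro mult_left_mono mult_right_mono) auto
  also have "\<dots> \<le> 4 * F * (r + 1)" using F r by (simp add: mult.assoc[symmetric] mult_right_mono)
  finally have "(4 * F + n * W) * k \<le> (4 * F * (r + 2)) * k"
    using k by (intro mult_right_mono) (auto simp: algebra_simps)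
  with bound have "F * (4/5 * (n * S)) \<le> F * (4 * ((r + 2) * k))" by (simp add: algebra_simps)
  moreover have "F > 0" using F n m by (smt (verit) mult_pos_pos)
  ultimately have "4/5 * (n * S) \<le> 4 * ((r + 2) * k)" by (simp only: mult_le_cancel_left_pos)
  then have "n * S \<le> 5 * ((r + 2) * k)" by linarith
  moreover have "n * m \<le> 2 * (n * S)" using mult_left_mono[OF S(1), of n] n by simp
  ultimately have "n * m \<le> 10 * ((r + 2) * k)" by linarith
  also have "\<dots> \<le> 10 * ((4 * l) * k)" using l k by (intro mult_left_mono mult_right_mono) auto
  finally show ?thesis using l r by (simp add: divide_le_eq algebra_simps)
qed

lemma rdt_cost_lower_bound:
  assumes D: "rdt_correct (inputs n m) (h1 n m) D" and n: "12 \<le> n" and m: "12 \<le> m"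
  shows "ennreal (1/40 * real n * real m / ln (real m)) \<le> rdt_cost (inputs n m) D"
proof -
  have m2: "m \<ge> 2" and n3: "n \<ge> 3" using n m by auto
  obtain r where r: "2 ^ r \<le> m" "\<forall>j\<in>{1..m}. length (T_path m j) \<le> Suc r"
    using length_T_path_le_log[OF m2] by blast
  let ?S = "real (card (right_half m))" and ?F = "real (n_free n m)"
  let ?W = "real (\<Sum>u\<in>T_inner m. n_below m u)"
  have S: "real m \<le> 2 * ?S" "?S \<le> real m" unfolding right_half_def by auto
  have "?W \<le> real (card (right_half m) * Suc r)"
    using sum_n_below_le[OF r(2)] by (simp only: of_nat_le_iff)
  then have W: "?W \<le> ?S * (real r + 1)" by (simp add: algebra_simps)
  have avg: "ennreal (4/5 * n * ?S * ?F) \<le> ennreal (4 * ?F + n * ?W) * rdt_cost (inputs n m) D"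
    using averaged_cost_bound[OF D m2 n3] by simp
  show ?thesis
  proof (cases "rdt_cost (inputs n m) D" rule: ennreal_cases)
    case (real k)
    from avg have "ennreal (4/5 * n * ?S * ?F) \<le> ennreal ((4 * ?F + n * ?W) * k)"
      unfolding real(2) ennreal_mult''[OF real(1)] .
    then have "4/5 * n * ?S * ?F \<le> (4 * ?F + n * ?W) * k"
      using real(1) by (subst (asm) ennreal_le_iff) (simp_all add: sum_nonneg)
    with n m S W n_free_ge[OF n m] log_le_ln[of m r] r(1) real(1)
    have "real n * real m / (40 * ln (real m)) \<le> k"
      by (intro lower_bound_arith[where r = "real r"]) auto
    then show ?thesis unfolding real(2) by (intro ennreal_leI) simp
  qed simp
qed

theorem theorem17:
  shows "\<exists>c::real. c > 0 \<and> (\<exists>N::nat. \<forall>n m. N \<le> n \<and> N \<le> m \<longrightarrow>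
           R_query (inputs n m) (h1 n m) \<ge> ennreal (c * real n * real m / ln (real m)))"
proof (intro exI[of _ "1/40"] conjI exI[of _ 12] allI impI)
  fix n m :: nat assume nm: "12 \<le> n \<and> 12 \<le> m"
  show "R_query (inputs n m) (h1 n m) \<ge> ennreal (1/40 * real n * real m / ln (real m))"
    unfolding R_query_def
  proof (rule INF_greatest)
    fix D assume "D \<in> {D. rdt_correct (inputs n m) (h1 n m) D}"
    with nm show "ennreal (1/40 * real n * real m / ln (real m)) \<le> rdt_cost (inputs n m) D"
      by (intro rdt_cost_lower_bound) auto
  qed
qed simp

end
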